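(* In the setting described in the context, with $U_1=W=H$ (distributed damping, so the embedding constant is $C=1$), assume conditions (i), (ii), the inequality $\lambda_1\|u\|_H^2\le\|u\|_V^2$ for all $u\in V$, (NL1), (NL2), and $\tau\le T_{2n}$ for all $n\in\mathbb N$. Set $$\tilde c_n=\frac{1}{1+\frac{T_{2n}^3}{30}\cdot\frac{1}{\frac{4}{\lambda_1 m_{2n}}+\frac{3T_{2n}^2}{32m_{2n}}+\frac{M_{2n}T_{2n}^2}{16\lambda_1}}}+M_{2n+1}T_{2n+1}.$$ If $$\sum_{n=0}^\infty\big(2M_{2n+1}T_{2n+1}+\ln\tilde c_n\big)=-\infty,$$ then every solution $u$ of $$u_{tt}(t)+Au(t)+B_1(t)B_1^*(t)u_t(t)+B_2(t)B_2^*(t)u_t(t-\tau)=f(u),\ t>0,\qquad u(0)=u_0\in V,\ u_t(0)=u_1\in H,$$ satisfies $E_S(t)\to0$ as $t\to+\infty$, where $E_S(t)=\frac12(\|u(t)\|_V^2+\|u_t(t)\|_H^2)-\mathcal F(u(t))$.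
   Context: $H$ is a real Hilbert space, $A:\mathcal D(A)\to H$ a densely defined, self-adjoint, positive, coercive linear operator, $V=\mathcal D(A^{1/2})$ with norm $\|v\|_V=\|A^{1/2}v\|_H$, $V\hookrightarrow H\equiv H'\hookrightarrow V'$ densely, and $\lambda_1>0$. $U_1,U_2$ are real Hilbert spaces and $B_i(t)\in\mathcal L(U_i,H)$ with $B_1^*(t)B_2^*(t)=0$ for all $t>0$. There is a sequence $0=t_0<t_1<t_2<\cdots$; $I_n=[t_n,t_{n+1})$, $T_n=t_{n+1}-t_n$. $B_2(t)=0$ on $I_{2n}$, $B_1(t)=0$ on $I_{2n+1}$, $B_1\in C^1([t_{2n},t_{2n+1}];\mathcal L(U_1,H))$, $B_2\in C^1([t_{2n+1},t_{2n+2}];\mathcal L(U_2,H))$. $\tau>0$ is the delay. $W$ is a Hilbert space continuously embedded via $\|u\|_W^2\le C\|u\|_H^2$. $f:V\to H$ is locally Lipschitz (for each $K>0$ there is $L(K)$ with $\|f(u)-f(v)\|_H\le L(K)\|u-v\|_V$ when $\|u\|_V,\|v\|_V\le K$), and $\mathcal F:V\to\mathbb R$ satisfies $\mathcal F(0)=0$, $\mathcal F'(u)v=\langle f(u),v\rangle_{V',V}$. (NL1): $sf(s)\le0$ for all $s\in\mathbb R$; (NL2): $sf(s)-F(s)\le0$ for all $s\in\mathbb R$, with $F(s)=\int_0^sf(r)dr$ (these are stated in scalar form, with $f$ acting pointwise as in the model $f(u)=-|u|^pu$, $\mathcal F(u)=\int_\Omega F(u)dx$). (i): there are $0<m_{2n}\le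 M_{2n}$ with $m_{2n}\|u\|_W^2\le\|B_1^*(t)u\|_{U_1}^2\le M_{2n}\|u\|_W^2$ for $u\in H$, $t\in I_{2n}$. (ii): there is $M_{2n+1}>0$ with $\|B_2^*(t)u\|_{U_2}^2\le M_{2n+1}\|u\|_W^2$ for $u\in H$, $t\in I_{2n+1}$. A solution on $[0,T]$ is $u\in L^2(0,T;V)\cap H^1(0,T;H)\cap H^2(0,T;V')$ with $\|B_1^*u_t\|_{U_1},\|B_2^*u_t(\cdot-\tau)\|_{U_2}\in L^2(0,T)$, $Au\in L^2(0,T;V')$, $f(u)\in L^2(0,T;H)$, the initial conditions, and the equation holding in $L^2(0,T;V')$; solutions are understood to exist for all $T>0$. *)

theory Defs
  imports "HOL-Analysis.Analysis"
begin

text \<open>Unbounded operators on a real Hilbert space H are given by a domain D and a map T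
  (only its values on D matter).\<close>

definition lin_op_on :: "'h::real_inner set \<Rightarrow> ('h \<Rightarrow> 'h) \<Rightarrow> bool" where
  "lin_op_on D T \<longleftrightarrow> subspace D \<and>
     (\<forall>x\<in>D. \<forall>y\<in>D. T (x + y) = T x + T y) \<and> (\<forall>c. \<forall>x\<in>D. T (c *\<^sub>R x) = c *\<^sub>R T x)"

text \<open>Densely defined self-adjoint operator: D(T*) = D(T) and T* = T on it.\<close>
definition self_adjoint_op :: "'h::real_inner set \<Rightarrow> ('h \<Rightarrow> 'h) \<Rightarrow> bool" where
  "self_adjoint_op D T \<longleftrightarrow> lin_op_on D T \<and> closure D = UNIV \<and>
     {y. \<exists>z. \<forall>x\<in>D. inner (T x) y = inner x z} = D \<and>
     (\<forall>x\<in>D. \<forall>y\<in>D. inner (T x) y = inner x (T y))"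

definition positive_op :: "'h::real_inner set \<Rightarrow> ('h \<Rightarrow> 'h) \<Rightarrow> bool" where
  "positive_op D T \<longleftrightarrow> (\<forall>x\<in>D. 0 \<le> inner (T x) x)"

definition coercive_op :: "'h::real_inner set \<Rightarrow> ('h \<Rightarrow> 'h) \<Rightarrow> bool" where
  "coercive_op D T \<longleftrightarrow> (\<exists>c>0. \<forall>x\<in>D. c * (norm x)\<^sup>2 \<le> inner (T x) x)"

text \<open>(V,S) is the (unique) positive self-adjoint square root A^(1/2) of (DA,A):
  V = D(A^(1/2)), S = A^(1/2).\<close>
definition is_sqrt_op :: "'h::real_inner set \<Rightarrow> ('h \<Rightarrow> 'h) \<Rightarrow> 'h set \<Rightarrow> ('h \<Rightarrow> 'h) \<Rightarrow> bool" where
  "is_sqrt_op DA A V S \<longleftrightarrow> self_adjoint_op V S \<and> positive_op V S \<and>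
     DA = {x\<in>V. S x \<in> V} \<and> (\<forall>x\<in>DA. A x = S (S x))"

text \<open>Global solution of
   u'' + A u + B1 B1* u' + B2 B2* u'(t-\<tau>) = f(u),  u(0)=u0, u'(0)=u1,
  with U1 = H. The equation in V' is stated in integrated weak form, tested with every
  phi in V; here <A u, phi>_{V',V} = <S u, S phi>. The representatives are the continuous
  ones: u in C([0,oo);V), u' in C([0,oo);H), u' the H-valued derivative of u.\<close>
definition delayed_wave_solution ::
  "'h::real_inner set \<Rightarrow> ('h \<Rightarrow> 'h) \<Rightarrow> (real \<Rightarrow> 'h \<Rightarrow>\<^sub>L 'h) \<Rightarrow> (real \<Rightarrow> 'h \<Rightarrow>\<^sub>L 'h)
   \<Rightarrow> (real \<Rightarrow> 'u::real_inner \<Rightarrow>\<^sub>L 'h) \<Rightarrow> (real \<Rightarrow> 'h \<Rightarrow>\<^sub>L 'u) \<Rightarrow> real \<Rightarrow> ('h \<Rightarrow> 'h)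
   \<Rightarrow> 'h \<Rightarrow> 'h \<Rightarrow> (real \<Rightarrow> 'h) \<Rightarrow> (real \<Rightarrow> 'h) \<Rightarrow> bool"
  where
  "delayed_wave_solution V S B1 B1s B2 B2s \<tau> f u0 u1 u u' \<longleftrightarrow>
     (\<forall>t\<ge>0. u t \<in> V) \<and>
     continuous_on {0..} u \<and> continuous_on {0..} (\<lambda>t. S (u t)) \<and>
     (\<forall>t\<ge>0. (u has_vector_derivative u' t) (at t within {0..})) \<and>
     continuous_on {0..} u' \<and>
     u 0 = u0 \<and> u' 0 = u1 \<and>
     (\<forall>\<phi>\<in>V. \<forall>t\<ge>0.
        ((\<lambda>s. inner (f (u s)) \<phi> - inner (S (u s)) (S \<phi>)
              - inner (blinfun_apply (B1 s) (blinfun_apply (B1s s) (u' s))) \<phi>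
              - inner (blinfun_apply (B2 s) (blinfun_apply (B2s s) (u' (s - \<tau>)))) \<phi>)
          has_integral (inner (u' t) \<phi> - inner u1 \<phi>)) {0..t})"

definition energy_S :: "('h::real_inner \<Rightarrow> 'h) \<Rightarrow> ('h \<Rightarrow> real) \<Rightarrow> (real \<Rightarrow> 'h) \<Rightarrow> (real \<Rightarrow> 'h) \<Rightarrow> real \<Rightarrow> real" where
  "energy_S S F u u' t = (1/2) * ((norm (S (u t)))\<^sup>2 + (norm (u' t))\<^sup>2) - F (u t)"

end

theory Submission
  imports Defs
begin

text \<open>
  On a damped interval [t_2n, t_2n+1) the energy E is nonincreasing, the loss being the integral of
  |B_1* u'|^2. Testing the equation with P^2 u, where P is the parabola vanishing at t_2n and
  t_2n+1, and using the Poincare inequality and (NL2), turns this loss into an observability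
  estimate E(t_2n+1) <= c_n E(t_2n), with c_n the first summand of ctil_n.
  On a delay interval [t_2n+1, t_2n+2) the delayed feedback produces energy at rate at most
  M_2n+1 (E(t - tau) + E(t)). Since tau <= T_2n, the delayed time lies in the preceding damped
  interval or in the current one, and a continuous induction bounds the energy there by
  exp(2 M_2n+1 T_2n+1) (E(t_2n+1) + M_2n+1 T_2n+1 E(t_2n)).
  Over one cycle the energy is therefore multiplied by at most exp(2 M_2n+1 T_2n+1 + ln ctil_n),
  so the divergence of the series drives E(t_2N), and with it E on the whole cycle, to zero.

  As S u is merely continuous in time, the energy identity behind all of this is obtained by a
  Steklov argument: the weak equation is tested with the shifts u(s + h) and u(s - h), and h
  tends to 0.
\<close>

section \<open>Difference quotients and uniform limits\<close>

lemma tendsto_difference_quotient: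
  fixes u :: "real \<Rightarrow> 'a::real_normed_vector"
  assumes "(u has_vector_derivative u') (at t within X)"
  shows "((\<lambda>s. (u s - u t) /\<^sub>R (s - t)) \<longlongrightarrow> u') (at t within X)"
proof -
  have "((\<lambda>s. norm (u s - u t - (s - t) *\<^sub>R u') / norm (s - t)) \<longlongrightarrow> 0) (at t within X)"
    using assms by (simp add: has_vector_derivative_def has_derivative_iff_norm)
  moreover have "norm (u s - u t - (s - t) *\<^sub>R u') / norm (s - t) = norm ((u s - u t) /\<^sub>R (s - t) - u')"
    if "s \<noteq> t" for s
  proof -
    have "(u s - u t) /\<^sub>R (s - t) - u' = (u s - u t - (s - t) *\<^sub>R u') /\<^sub>R (s - t)"
      using that by (simp add: scaleR_diff_right)
    then show ?thesis by (simp only: norm_scaleR abs_inverse real_norm_def divide_inverse_commute)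
  qed
  then have "\<forall>\<^sub>F s in at t within X.
      norm (u s - u t - (s - t) *\<^sub>R u') / norm (s - t) = norm ((u s - u t) /\<^sub>R (s - t) - u')"
    by (auto simp: eventually_at_filter)
  ultimately have "((\<lambda>s. norm ((u s - u t) /\<^sub>R (s - t) - u')) \<longlongrightarrow> 0) (at t within X)"
    by (rule Lim_transform_eventually)
  then show ?thesis
    by (simp add: tendsto_norm_zero_iff LIM_zero_iff)
qed

lemma tendsto_difference_quotient_at_right:
  fixes u :: "real \<Rightarrow> 'a::real_normed_vector"
  assumes "(u has_vector_derivative u') (at t within {t..b})" and "t < b"
  shows "((\<lambda>h. (u (t + h) - u t) /\<^sub>R h) \<longlongrightarrow> u') (at_right 0)"
proof -
  have "((\<lambda>s. (u s - u t) /\<^sub>R (s - t)) \<longlongrightarrow> u') (at_right t)"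
    using tendsto_difference_quotient[OF assms(1)] at_within_Icc_at_right[OF assms(2)] by simp
  then show ?thesis
    by (simp add: at_right_to_0[of t] filterlim_filtermap add.commute)
qed

lemma uniform_limit_shift_at_right:
  fixes f :: "real \<Rightarrow> 'a::metric_space"
  assumes "continuous_on {a..b} f" and "t < b"
  shows "uniform_limit {a..t} (\<lambda>h s. f (s + h)) f (at_right 0)"
proof (rule uniform_limitI)
  fix e :: real assume "0 < e"
  then obtain d where "d > 0"
    and d: "\<And>x x'. x \<in> {a..b} \<Longrightarrow> x' \<in> {a..b} \<Longrightarrow> dist x' x < d \<Longrightarrow> dist (f x') (f x) < e"
    using compact_uniformly_continuous[OF assms(1) compact_Icc]
    unfolding uniformly_continuous_on_def by metis
  show "\<forall>\<^sub>F h in at_right 0. \<forall>s\<in>{a..t}. dist (f (s + h)) (f s) < e"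
    unfolding eventually_at_right_field using \<open>d > 0\<close> assms(2)
    by (intro exI[of _ "min d (b - t)"]) (auto intro!: d simp: dist_real_def)
qed

lemma uniform_limit_difference_quotient:
  fixes u v :: "real \<Rightarrow> 'a::real_normed_vector"
  assumes du: "\<And>s. s \<in> {a..b} \<Longrightarrow> (u has_vector_derivative v s) (at s within {a..b})"
    and cv: "continuous_on {a..b} v" and "t < b"
  shows "uniform_limit {a..t} (\<lambda>h s. (u (s + h) - u s) /\<^sub>R h) v (at_right 0)"
proof (rule uniform_limitI)
  fix e :: real assume "0 < e"
  then obtain d where "d > 0"
    and d: "\<And>x x'. x \<in> {a..b} \<Longrightarrow> x' \<in> {a..b} \<Longrightarrow> dist x' x < d \<Longrightarrow> dist (v x') (v x) < e / 2"
    using compact_uniformly_continuous[OF cv compact_Icc]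
    unfolding uniformly_continuous_on_def by (metis half_gt_zero)
  have "dist ((u (s + h) - u s) /\<^sub>R h) (v s) < e"
    if s: "s \<in> {a..t}" and h: "0 < h" "h < min d (b - t)" for s h
  proof -
    have sub: "{s..s + h} \<subseteq> {a..b}" using s h by auto
    have "norm (u (s + h) - u s - (s + h - s) *\<^sub>R v s) \<le> norm (s + h - s) * (e / 2)"
    proof (rule vector_differentiable_bound_linearization[of "{s..s + h}"])
      show "(u has_vector_derivative v x) (at x within {s..s + h})" if "x \<in> {s..s + h}" for x
        using du[of x] that sub has_vector_derivative_within_subset by blast
      show "norm (v x - v s) \<le> e / 2" if "x \<in> {s..s + h}" for x
        using d[of s x] that sub h by (auto simp: dist_norm dist_real_def)
    qed (use h in \<open>auto simp: closed_segment_eq_real_ivl\<close>)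
    then have "norm (u (s + h) - u s - h *\<^sub>R v s) \<le> h * (e / 2)"
      using h by simp
    moreover have "norm (y /\<^sub>R h) \<le> e / 2" if "norm y \<le> h * (e / 2)" for y :: 'a
      using that h by (simp add: field_simps)
    moreover have "(u (s + h) - u s - h *\<^sub>R v s) /\<^sub>R h = (u (s + h) - u s) /\<^sub>R h - v s"
      using h by (simp add: scaleR_diff_right)
    ultimately have "norm ((u (s + h) - u s) /\<^sub>R h - v s) \<le> e / 2"
      by metis
    then show ?thesis using \<open>0 < e\<close> by (simp add: dist_norm)
  qed
  then show "\<forall>\<^sub>F h in at_right 0. \<forall>s\<in>{a..t}. dist ((u (s + h) - u s) /\<^sub>R h) (v s) < e"
    unfolding eventually_at_right_field using \<open>d > 0\<close> \<open>t < b\<close>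
    by (intro exI[of _ "min d (b - t)"]) auto
qed

lemma tendsto_integral_uniform_limit:
  fixes f :: "'a \<Rightarrow> real \<Rightarrow> 'b::banach"
  assumes ul: "uniform_limit {a..b} f g F" and cont: "\<forall>\<^sub>F x in F. continuous_on {a..b} (f x)"
    and "F \<noteq> bot"
  shows "((\<lambda>x. integral {a..b} (f x)) \<longlongrightarrow> integral {a..b} g) F"
proof -
  have cg: "continuous_on {a..b} g"
    using uniform_limit_theorem[OF cont ul] \<open>F \<noteq> bot\<close> by simp
  \<comment> \<open>\<open>uniform_limit_integral\<close> wants every \<open>f x\<close> continuous, so the others are replaced by \<open>g\<close>.\<close>
  define f' where "f' x = (if continuous_on {a..b} (f x) then f x else g)" for x
  have "uniform_limit {a..b} f' g F \<longleftrightarrow> uniform_limit {a..b} f g F"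
    by (rule uniform_limit_cong) (use cont in \<open>auto simp: f'_def elim!: eventually_mono\<close>)
  with ul have "uniform_limit {a..b} f' g F" by simp
  then obtain I J where I: "\<And>x. (f' x has_integral I x) {a..b}"
      and J: "(g has_integral J) {a..b}" and IJ: "(I \<longlongrightarrow> J) F"
    by (rule uniform_limit_integral) (use cg \<open>F \<noteq> bot\<close> in \<open>auto simp: f'_def\<close>)
  have "\<forall>\<^sub>F x in F. I x = integral {a..b} (f x)"
    using cont by eventually_elim (metis I f'_def integral_unique)
  with IJ show ?thesis
    using integral_unique[OF J] by (simp add: tendsto_cong)
qed

lemma has_real_derivative_inner_increments:
  fixes v w :: "real \<Rightarrow> 'a::real_inner"
  assumes "(w has_vector_derivative w') (at t within X)" and "continuous (at t within X) v"
  shows "((\<lambda>s. inner (v s - v t) (w s - w t)) has_real_derivative 0) (at t within X)"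
proof -
  have "((\<lambda>s. inner (v s - v t) ((w s - w t) /\<^sub>R (s - t))) \<longlongrightarrow> inner 0 w') (at t within X)"
    using assms(2) unfolding continuous_within
    by (intro tendsto_intros tendsto_difference_quotient[OF assms(1)]) (simp add: LIM_zero)
  then show ?thesis
    by (simp add: has_field_derivative_iff divide_inverse_commute)
qed

section \<open>Energy equality for weak solutions of abstract wave equations\<close>

lemma has_integral_change_base_point:
  fixes g :: "real \<Rightarrow> real"
  assumes from_a: "\<And>y. y \<in> {a..z} \<Longrightarrow> (g has_integral \<Phi> y - \<Phi> a) {a..y}" and "a \<le> x" "x \<le> z"
  shows "(g has_integral \<Phi> z - \<Phi> x) {x..z}"
proof -
  have Iz: "(g has_integral \<Phi> z - \<Phi> a) {a..z}" and Ix: "(g has_integral \<Phi> x - \<Phi> a) {a..x}"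
    using from_a assms by auto
  have int: "g integrable_on {a..z}" using Iz by blast
  have "integral {a..x} g + integral {x..z} g = integral {a..z} g"
    using Henstock_Kurzweil_Integration.integral_combine[OF assms(2,3) int] .
  then have "integral {x..z} g = \<Phi> z - \<Phi> x"
    using integral_unique[OF Iz] integral_unique[OF Ix] by simp
  moreover have "(g has_integral integral {x..z} g) {x..z}"
    using integrable_integral[OF integrable_subinterval_real[OF int]] assms by auto
  ultimately show ?thesis by simp
qed

locale wave_weak_solution =
  fixes V :: "'h::real_inner set" and S :: "'h \<Rightarrow> 'h"
    and a b :: real and u v \<kappa> :: "real \<Rightarrow> 'h"
  assumes ab: "a \<le> b"
    and uV: "\<And>s. s \<in> {a..b} \<Longrightarrow> u s \<in> V"
    and cu: "continuous_on {a..b} u" and cSu: "continuous_on {a..b} (\<lambda>s. S (u s))"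
    and cv: "continuous_on {a..b} v" and c\<kappa>: "continuous_on {a..b} \<kappa>"
    and du: "\<And>s. s \<in> {a..b} \<Longrightarrow> (u has_vector_derivative v s) (at s within {a..b})"
    and weak: "\<And>\<phi> x. \<phi> \<in> V \<Longrightarrow> x \<in> {a..b} \<Longrightarrow>
      ((\<lambda>s. inner (\<kappa> s) \<phi> - inner (S (u s)) (S \<phi>)) has_integral (inner (v x) \<phi> - inner (v a) \<phi>)) {a..x}"
begin

lemma weak_equation_from:
  assumes "\<phi> \<in> V" and "a \<le> a'" "a' \<le> x" "x \<le> b"
  shows "((\<lambda>s. inner (\<kappa> s) \<phi> - inner (S (u s)) (S \<phi>)) has_integral (inner (v x) \<phi> - inner (v a') \<phi>)) {a'..x}"
  using has_integral_change_base_point[of a x _ "\<lambda>y. inner (v y) \<phi>"] weak[OF \<open>\<phi> \<in> V\<close>] assms by auto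

lemma subinterval:
  assumes "a \<le> a'" "a' \<le> b'" "b' \<le> b"
  shows "wave_weak_solution V S a' b' u v \<kappa>"
proof
  have sub: "{a'..b'} \<subseteq> {a..b}" using assms by auto
  show "a' \<le> b'" by fact
  show "u s \<in> V" if "s \<in> {a'..b'}" for s using uV sub that by auto
  show "continuous_on {a'..b'} u" "continuous_on {a'..b'} (\<lambda>s. S (u s))"
    "continuous_on {a'..b'} v" "continuous_on {a'..b'} \<kappa>"
    using continuous_on_subset[OF _ sub] cu cSu cv c\<kappa> by auto
  show "(u has_vector_derivative v s) (at s within {a'..b'})" if "s \<in> {a'..b'}" for s
    using du[of s] that sub has_vector_derivative_within_subset by blast
  show "((\<lambda>s. inner (\<kappa> s) \<phi> - inner (S (u s)) (S \<phi>)) has_integral (inner (v x) \<phi> - inner (v a') \<phi>)) {a'..x}"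
    if "\<phi> \<in> V" "x \<in> {a'..b'}" for \<phi> x
    using weak_equation_from[OF that(1)] that(2) assms by auto
qed

lemma has_real_derivative_inner_velocity:
  assumes "\<phi> \<in> V" and "x \<in> {a..b}"
  shows "((\<lambda>s. inner (v s) \<phi>) has_real_derivative (inner (\<kappa> x) \<phi> - inner (S (u x)) (S \<phi>))) (at x within {a..b})"
proof -
  let ?g = "\<lambda>s. inner (\<kappa> s) \<phi> - inner (S (u s)) (S \<phi>)"
  have "continuous_on {a..b} ?g" by (intro continuous_intros c\<kappa> cSu)
  then have D: "((\<lambda>y. inner (v a) \<phi> + integral {a..y} ?g) has_real_derivative ?g x) (at x within {a..b})"
    using integral_has_real_derivative[OF _ \<open>x \<in> {a..b}\<close>] by (auto intro!: derivative_eq_intros)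
  have eq: "inner (v y) \<phi> = inner (v a) \<phi> + integral {a..y} ?g" if "y \<in> {a..b}" for y
    using integral_unique[OF weak[OF \<open>\<phi> \<in> V\<close> that]] by simp
  show ?thesis
    using has_derivative_transform[OF \<open>x \<in> {a..b}\<close> eq D[unfolded has_field_derivative_def]]
    unfolding has_field_derivative_def .
qed

lemma has_real_derivative_inner_velocity_test:
  assumes wV: "\<And>s. s \<in> {a..b} \<Longrightarrow> w s \<in> V"
    and dw: "(w has_vector_derivative w') (at t within {a..b})" and t: "t \<in> {a..b}"
  shows "((\<lambda>s. inner (v s) (w s)) has_real_derivative
           inner (\<kappa> t) (w t) - inner (S (u t)) (S (w t)) + inner (v t) w') (at t within {a..b})"
proof -
  have "((\<lambda>s. inner (v s) (w t) + inner (v t) (w s) - inner (v t) (w t) + inner (v s - v t) (w s - w t))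
      has_real_derivative (inner (\<kappa> t) (w t) - inner (S (u t)) (S (w t))) + inner (v t) w' - 0 + 0)
      (at t within {a..b})"
  proof (intro derivative_intros)
    show "((\<lambda>s. inner (v s) (w t)) has_real_derivative inner (\<kappa> t) (w t) - inner (S (u t)) (S (w t)))
        (at t within {a..b})"
      using has_real_derivative_inner_velocity[OF wV[OF t] t] .
    show "((\<lambda>s. inner (v t) (w s)) has_real_derivative inner (v t) w') (at t within {a..b})"
      using bounded_linear.has_vector_derivative[OF bounded_linear_inner_right dw]
      by (simp add: has_real_derivative_iff_has_vector_derivative)
    show "((\<lambda>s. inner (v s - v t) (w s - w t)) has_real_derivative 0) (at t within {a..b})"
      using has_real_derivative_inner_increments[OF dw] cv t
      by (simp add: continuous_on_eq_continuous_within)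
  qed
  moreover have "inner (v s) (w t) + inner (v t) (w s) - inner (v t) (w t) + inner (v s - v t) (w s - w t)
      = inner (v s) (w s)" for s
    by (simp add: inner_diff_left inner_diff_right inner_commute)
  ultimately show ?thesis by simp
qed

lemma has_integral_inner_velocity_test:
  assumes "\<And>s. s \<in> {a..b} \<Longrightarrow> w s \<in> V"
    and "\<And>s. s \<in> {a..b} \<Longrightarrow> (w has_vector_derivative w' s) (at s within {a..b})"
  shows "((\<lambda>s. inner (\<kappa> s) (w s) - inner (S (u s)) (S (w s)) + inner (v s) (w' s)) has_integral
           inner (v b) (w b) - inner (v a) (w a)) {a..b}"
  using has_real_derivative_inner_velocity_test[OF assms]
  by (intro fundamental_theorem_of_calculus[OF ab])
    (simp add: has_real_derivative_iff_has_vector_derivative)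

lemma shift_has_vector_derivative:
  assumes "\<And>r. r \<in> {x..y} \<Longrightarrow> r + c \<in> {a..b}" and "s \<in> {x..y}"
  shows "((\<lambda>r. u (r + c)) has_vector_derivative v (s + c)) (at s within {x..y})"
proof -
  have "((\<lambda>r. r + c) has_vector_derivative 1) (at s within {x..y})"
    by (auto intro!: derivative_eq_intros simp flip: has_real_derivative_iff_has_vector_derivative)
  moreover have "(u has_vector_derivative v (s + c)) (at (s + c) within (\<lambda>r. r + c) ` {x..y})"
    using has_vector_derivative_within_subset[OF du] assms by (auto simp: image_subset_iff)
  ultimately show ?thesis
    using vector_diff_chain_within by (fastforce simp: o_def)
qed

definition steklov_boundary :: "real \<Rightarrow> real \<Rightarrow> real" where
  "steklov_boundary x h = inner (v x) (u (x + h)) - inner (v (x + h)) (u x)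
     + integral {x..x + h} (\<lambda>s. inner (\<kappa> s) (u s))"

lemma has_integral_shifted_tests:
  assumes h: "0 < h" and t: "a \<le> t" "t + h \<le> b"
  shows "((\<lambda>s. inner (\<kappa> s) (u (s + h)) - inner (\<kappa> (s + h)) (u s)) has_integral
    (inner (v t) (u (t + h)) - inner (v a) (u (a + h))) - (inner (v (t + h)) (u t) - inner (v (a + h)) (u a)))
    {a..t}"
proof -
  interpret L: wave_weak_solution V S a t u v \<kappa>
    using subinterval[of a t] t h by auto
  interpret R: wave_weak_solution V S "a + h" "t + h" u v \<kappa>
    using subinterval[of "a + h" "t + h"] t h by auto
  have L_int: "((\<lambda>s. inner (\<kappa> s) (u (s + h)) - inner (S (u s)) (S (u (s + h))) + inner (v s) (v (s + h)))
      has_integral inner (v t) (u (t + h)) - inner (v a) (u (a + h))) {a..t}"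
    by (rule L.has_integral_inner_velocity_test) (use t h in \<open>auto intro!: uV shift_has_vector_derivative\<close>)
  have "((\<lambda>s. inner (\<kappa> s) (u (s + -h)) - inner (S (u s)) (S (u (s + -h))) + inner (v s) (v (s + -h)))
      has_integral inner (v (t + h)) (u (t + h + -h)) - inner (v (a + h)) (u (a + h + -h))) {a + h..t + h}"
    by (rule R.has_integral_inner_velocity_test)
      (use t h in \<open>auto intro!: uV shift_has_vector_derivative[of _ _ "-h", simplified]\<close>)
  from has_integral_shift_real_ivl[OF this, of h]
  have R_int: "((\<lambda>s. inner (\<kappa> (s + h)) (u s) - inner (S (u (s + h))) (S (u s)) + inner (v (s + h)) (v s))
      has_integral inner (v (t + h)) (u t) - inner (v (a + h)) (u a)) {a..t}"
    by simp
  from has_integral_diff[OF L_int R_int] show ?thesis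
    by (simp add: inner_commute[of "S (u (s + h))" for s] inner_commute[of "v (s + h)" for s])
qed

lemma steklov_identity:
  assumes h: "0 < h" and t: "a \<le> t" "t + h \<le> b"
  shows "((\<lambda>s. inner (\<kappa> s + \<kappa> (s + h)) (u (s + h) - u s)) has_integral
           steklov_boundary t h - steklov_boundary a h) {a..t}"
proof -
  define q where "q s = inner (\<kappa> s) (u s)" for s
  have cq: "continuous_on {a..b} q"
    unfolding q_def by (intro continuous_intros c\<kappa> cu)
  have q_int: "(q has_integral integral {x..y} q) {x..y}" if "a \<le> x" "y \<le> b" for x y
    using integrable_continuous_real[OF continuous_on_subset[OF cq]] that by auto
  have "((\<lambda>s. q (s + h)) has_integral integral {a + h..t + h} q) {a..t}"
    using has_integral_shift_real_ivl[OF q_int[of "a + h" "t + h"], of h] t h by simp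
  from has_integral_add[OF has_integral_diff[OF has_integral_shifted_tests[OF assms] q_int[of a t]] this]
  have I: "((\<lambda>s. inner (\<kappa> s + \<kappa> (s + h)) (u (s + h) - u s)) has_integral
      (inner (v t) (u (t + h)) - inner (v a) (u (a + h))) - (inner (v (t + h)) (u t) - inner (v (a + h)) (u a))
      - integral {a..t} q + integral {a + h..t + h} q) {a..t}"
    using t h by (simp add: q_def inner_add_left inner_diff_right algebra_simps)
  have "integral {a..t} q + integral {t..t + h} q = integral {a..a + h} q + integral {a + h..t + h} q"
  proof -
    have int: "q integrable_on {a..t + h}" using q_int[of a "t + h"] t by blast
    show ?thesis
      using Henstock_Kurzweil_Integration.integral_combine[OF _ _ int, of t]
        Henstock_Kurzweil_Integration.integral_combine[OF _ _ int, of "a + h"] t h by simp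
  qed
  then have "(inner (v t) (u (t + h)) - inner (v a) (u (a + h)))
      - (inner (v (t + h)) (u t) - inner (v (a + h)) (u a)) - integral {a..t} q + integral {a + h..t + h} q
      = steklov_boundary t h - steklov_boundary a h"
    unfolding steklov_boundary_def q_def[symmetric] by linarith
  with I show ?thesis by simp
qed

lemma tendsto_steklov_boundary:
  assumes x: "a \<le> x" "x < b"
  shows "((\<lambda>h. steklov_boundary x h / h) \<longlongrightarrow> inner (v x) (v x) + inner (S (u x)) (S (u x))) (at_right 0)"
proof -
  let ?q = "\<lambda>s. inner (\<kappa> s) (u s)"
  have xb: "x \<in> {a..b}" and sub: "{x..b} \<subseteq> {a..b}" using x by auto
  have "((\<lambda>h. (u (x + h) - u x) /\<^sub>R h) \<longlongrightarrow> v x) (at_right 0)"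
    using has_vector_derivative_within_subset[OF du[OF xb] sub] \<open>x < b\<close>
    by (rule tendsto_difference_quotient_at_right)
  moreover have "((\<lambda>h. (inner (v (x + h)) (u x) - inner (v x) (u x)) /\<^sub>R h)
      \<longlongrightarrow> inner (\<kappa> x) (u x) - inner (S (u x)) (S (u x))) (at_right 0)"
    using DERIV_subset[OF has_real_derivative_inner_velocity[OF uV[OF xb] xb] sub] \<open>x < b\<close>
    by (intro tendsto_difference_quotient_at_right)
      (simp_all add: has_real_derivative_iff_has_vector_derivative)
  moreover have "((\<lambda>h. (integral {x..x + h} ?q - integral {x..x} ?q) /\<^sub>R h) \<longlongrightarrow> ?q x) (at_right 0)"
  proof (rule tendsto_difference_quotient_at_right[OF integral_has_vector_derivative \<open>x < b\<close>])
    show "continuous_on {x..b} ?q"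
      by (intro continuous_intros continuous_on_subset[OF c\<kappa> sub] continuous_on_subset[OF cu sub])
  qed (use x in auto)
  ultimately have "((\<lambda>h. inner (v x) ((u (x + h) - u x) /\<^sub>R h)
        - (inner (v (x + h)) (u x) - inner (v x) (u x)) /\<^sub>R h
        + (integral {x..x + h} ?q - integral {x..x} ?q) /\<^sub>R h)
      \<longlongrightarrow> inner (v x) (v x) - (inner (\<kappa> x) (u x) - inner (S (u x)) (S (u x))) + ?q x) (at_right 0)"
    by (intro tendsto_intros)
  then show ?thesis
    by (simp add: steklov_boundary_def inner_diff_right divide_inverse algebra_simps)
qed

lemma energy_equality_before_end:
  assumes t: "a \<le> t" "t < b"
  shows "inner (v t) (v t) + inner (S (u t)) (S (u t)) - (inner (v a) (v a) + inner (S (u a)) (S (u a)))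
    = integral {a..t} (\<lambda>s. 2 * inner (\<kappa> s) (v s))"
proof -
  let ?D = "\<lambda>h s. inner (\<kappa> s + \<kappa> (s + h)) ((u (s + h) - u s) /\<^sub>R h)"
  have sub: "{a..t} \<subseteq> {a..b}" using t by auto
  have bounded: "bounded (f ` {a..t})" if "continuous_on {a..b} f" for f :: "real \<Rightarrow> 'h"
    using compact_imp_bounded[OF compact_continuous_image[OF continuous_on_subset[OF that sub] compact_Icc]] .
  have "uniform_limit {a..t} ?D (\<lambda>s. inner (\<kappa> s + \<kappa> s) (v s)) (at_right 0)"
    by (intro uniform_limit_intros uniform_limit_shift_at_right[OF c\<kappa> \<open>t < b\<close>]
        uniform_limit_difference_quotient[OF du cv \<open>t < b\<close>] bounded cv c\<kappa> continuous_intros)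
  moreover have "\<forall>\<^sub>F h in at_right 0. continuous_on {a..t} (?D h)"
    unfolding eventually_at_right_field
  proof (intro exI[of _ "b - t"] conjI allI impI)
    fix h assume "0 < h" "h < b - t"
    then have "continuous_on {a..t} (\<lambda>s. f (s + h))" if "continuous_on {a..b} f" for f :: "real \<Rightarrow> 'h"
      by (intro continuous_on_compose2[OF that] continuous_intros) auto
    with cu c\<kappa> show "continuous_on {a..t} (?D h)"
      by (intro continuous_intros continuous_on_subset[OF cu sub] continuous_on_subset[OF c\<kappa> sub]) auto
  qed (use t in auto)
  ultimately have "((\<lambda>h. integral {a..t} (?D h)) \<longlongrightarrow> integral {a..t} (\<lambda>s. inner (\<kappa> s + \<kappa> s) (v s)))
      (at_right 0)"
    by (rule tendsto_integral_uniform_limit) simp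
  moreover have "\<forall>\<^sub>F h in at_right 0.
      integral {a..t} (?D h) = (steklov_boundary t h - steklov_boundary a h) / h"
    unfolding eventually_at_right_field
  proof (intro exI[of _ "b - t"] conjI allI impI)
    fix h assume "0 < h" "h < b - t"
    then have "(?D h has_integral (steklov_boundary t h - steklov_boundary a h) / h) {a..t}"
      using has_integral_mult_right[OF steklov_identity[of h t], of "inverse h"] t
      by (simp add: divide_inverse mult.commute)
    then show "integral {a..t} (?D h) = (steklov_boundary t h - steklov_boundary a h) / h"
      by (rule integral_unique)
  qed (use t in auto)
  ultimately have "((\<lambda>h. (steklov_boundary t h - steklov_boundary a h) / h)
      \<longlongrightarrow> integral {a..t} (\<lambda>s. inner (\<kappa> s + \<kappa> s) (v s))) (at_right 0)"
    by (rule Lim_transform_eventually)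
  moreover have "((\<lambda>h. (steklov_boundary t h - steklov_boundary a h) / h) \<longlongrightarrow>
      inner (v t) (v t) + inner (S (u t)) (S (u t)) - (inner (v a) (v a) + inner (S (u a)) (S (u a))))
      (at_right 0)"
    using tendsto_diff[OF tendsto_steklov_boundary tendsto_steklov_boundary] t
    by (simp add: diff_divide_distrib)
  ultimately show ?thesis
    by (simp add: tendsto_unique[OF trivial_limit_at_right_real] inner_add_left)
qed

theorem energy_equality:
  "((\<lambda>s. 2 * inner (\<kappa> s) (v s)) has_integral
     inner (v b) (v b) + inner (S (u b)) (S (u b)) - (inner (v a) (v a) + inner (S (u a)) (S (u a)))) {a..b}"
proof (cases "a = b")
  case False
  then have "a < b" using ab by simp
  have "continuous_on {a..b} (\<lambda>s. 2 * inner (\<kappa> s) (v s))"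
    by (intro continuous_intros c\<kappa> cv)
  then have int: "(\<lambda>s. 2 * inner (\<kappa> s) (v s)) integrable_on {a..b}"
    by (rule integrable_continuous_real)
  define \<Psi> where "\<Psi> t = inner (v t) (v t) + inner (S (u t)) (S (u t))
      - integral {a..t} (\<lambda>s. 2 * inner (\<kappa> s) (v s))" for t
  have "continuous_on {a..b} \<Psi>"
    unfolding \<Psi>_def by (intro continuous_intros cv cSu indefinite_integral_continuous_1 int)
  then have "continuous_on (closure {a..<b}) \<Psi>" using \<open>a < b\<close> by simp
  moreover have "\<Psi> t = \<Psi> a" if "t \<in> {a..<b}" for t
    using energy_equality_before_end[of t] that by (simp add: \<Psi>_def)
  moreover have "b \<in> closure {a..<b}" using \<open>a < b\<close> by simp
  ultimately have "\<Psi> b = \<Psi> a"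
    by (rule continuous_constant_on_closure)
  then have eq: "integral {a..b} (\<lambda>s. 2 * inner (\<kappa> s) (v s))
      = inner (v b) (v b) + inner (S (u b)) (S (u b)) - (inner (v a) (v a) + inner (S (u a)) (S (u a)))"
    unfolding \<Psi>_def by simp
  show ?thesis
    unfolding eq[symmetric] by (rule integrable_integral[OF int])
qed (simp add: has_integral_refl)

lemma has_integral_multiplier:
  assumes dP: "\<And>s. s \<in> {a..b} \<Longrightarrow> (P has_real_derivative P' s) (at s within {a..b})"
    and "P a = 0" "P b = 0"
  shows "((\<lambda>s. 2 * P s * P' s * inner (v s) (u s)
      + (P s)\<^sup>2 * (inner (\<kappa> s) (u s) - inner (S (u s)) (S (u s)) + inner (v s) (v s))) has_integral 0) {a..b}"
proof -
  let ?W = "\<lambda>s. inner (\<kappa> s) (u s) - inner (S (u s)) (S (u s)) + inner (v s) (v s)"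
  have "((\<lambda>s. P s * P s * inner (v s) (u s)) has_vector_derivative
      2 * P s * P' s * inner (v s) (u s) + (P s)\<^sup>2 * ?W s) (at s within {a..b})"
    if s: "s \<in> {a..b}" for s
  proof -
    have "((\<lambda>s. P s * P s * inner (v s) (u s)) has_real_derivative
        2 * P s * P' s * inner (v s) (u s) + (P s)\<^sup>2 * ?W s) (at s within {a..b})"
      by (rule DERIV_cong[OF DERIV_mult[OF DERIV_mult[OF dP dP]
            has_real_derivative_inner_velocity_test[OF uV du[OF s] s]]])
        (use s in \<open>auto simp: power2_eq_square algebra_simps\<close>)
    then show ?thesis
      unfolding has_real_derivative_iff_has_vector_derivative .
  qed
  from fundamental_theorem_of_calculus[OF ab this] show ?thesis
    using \<open>P a = 0\<close> \<open>P b = 0\<close> by simp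
qed

end

section \<open>The nonlinearity and its potential\<close>

lemma lin_op_on_diff:
  assumes "lin_op_on V S" "x \<in> V" "y \<in> V"
  shows "S (x - y) = S x - S y"
proof -
  have "subspace V" and "(-1) *\<^sub>R y \<in> V"
    using assms subspace_scale unfolding lin_op_on_def by blast+
  then show ?thesis
    using assms unfolding lin_op_on_def by (metis add_uminus_conv_diff scaleR_minus1_left)
qed

locale potential_nonlinearity =
  fixes V :: "'h::real_inner set" and S :: "'h \<Rightarrow> 'h" and f :: "'h \<Rightarrow> 'h" and F :: "'h \<Rightarrow> real"
  assumes lin: "lin_op_on V S"
    and F_deriv: "\<forall>x\<in>V. \<forall>w\<in>V. ((\<lambda>s. F (x + s *\<^sub>R w)) has_real_derivative inner (f x) w) (at 0)"
    and f_loclip: "\<forall>K>0. \<exists>L. \<forall>x\<in>V. \<forall>y\<in>V. norm (S x) \<le> K \<longrightarrow> norm (S y) \<le> K \<longrightarrow>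
                     norm (f x - f y) \<le> L * norm (S (x - y))"
begin

lemma subspace_V: "subspace V"
  using lin unfolding lin_op_on_def by blast

lemma F_mean_value:
  assumes x: "x \<in> V" and y: "y \<in> V"
  obtains \<theta> where "0 < \<theta>" "\<theta> < 1" "F y - F x = inner (f (x + \<theta> *\<^sub>R (y - x))) (y - x)"
proof -
  define w where "w = y - x"
  have w: "w \<in> V" using subspace_V x y subspace_diff w_def by blast
  have "((\<lambda>s. F (x + s *\<^sub>R w)) has_real_derivative inner (f (x + r *\<^sub>R w)) w) (at r)" for r
  proof -
    have "x + r *\<^sub>R w \<in> V" using subspace_V x w by (simp add: subspace_add subspace_scale)
    then have "((\<lambda>s. F ((x + r *\<^sub>R w) + s *\<^sub>R w)) has_real_derivative inner (f (x + r *\<^sub>R w)) w) (at (r + - r))"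
      using F_deriv w by simp
    then have "((\<lambda>s. F ((x + r *\<^sub>R w) + (s + - r) *\<^sub>R w)) has_real_derivative inner (f (x + r *\<^sub>R w)) w) (at r)"
      by (simp only: DERIV_shift)
    then show ?thesis by (simp add: algebra_simps)
  qed
  then obtain \<theta> where "0 < \<theta>" "\<theta> < 1" "F (x + 1 *\<^sub>R w) - F (x + 0 *\<^sub>R w) = (1 - 0) * inner (f (x + \<theta> *\<^sub>R w)) w"
    using MVT2[of 0 1 "\<lambda>s. F (x + s *\<^sub>R w)" "\<lambda>s. inner (f (x + s *\<^sub>R w)) w"] by auto
  then show ?thesis using that unfolding w_def by simp
qed

lemma F_nonpos:
  assumes F0: "F 0 = 0" and NL1: "\<forall>x\<in>V. inner x (f x) \<le> 0" and x: "x \<in> V"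
  shows "F x \<le> 0"
proof -
  obtain \<theta> where \<theta>: "0 < \<theta>" "\<theta> < 1" "F x - F 0 = inner (f (\<theta> *\<^sub>R x)) x"
    using F_mean_value[OF subspace_0[OF subspace_V] x] by auto
  have "\<theta> * inner (f (\<theta> *\<^sub>R x)) x = inner (\<theta> *\<^sub>R x) (f (\<theta> *\<^sub>R x))"
    by (simp add: inner_commute)
  also have "\<dots> \<le> 0" using NL1 subspace_scale[OF subspace_V x] by blast
  finally show ?thesis using \<theta> F0 by (simp add: mult_le_0_iff)
qed

lemma tendsto_f:
  assumes lim: "((\<lambda>s. S (p s)) \<longlongrightarrow> S q) G" and evV: "\<forall>\<^sub>F s in G. p s \<in> V" and q: "q \<in> V"
  shows "((\<lambda>s. f (p s)) \<longlongrightarrow> f q) G"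
proof -
  define K where "K = norm (S q) + 1"
  have "K > 0" by (simp add: K_def add_nonneg_pos)
  then obtain L where L: "\<forall>x\<in>V. \<forall>y\<in>V. norm (S x) \<le> K \<longrightarrow> norm (S y) \<le> K \<longrightarrow> norm (f x - f y) \<le> L * norm (S (x - y))"
    using f_loclip by blast
  have "\<forall>\<^sub>F s in G. dist (S (p s)) (S q) < 1" using lim by (simp add: tendsto_iff)
  with evV have "\<forall>\<^sub>F s in G. norm (f (p s) - f q) \<le> \<bar>L\<bar> * norm (S (p s) - S q)"
  proof eventually_elim
    case (elim s)
    have "norm (S (p s)) \<le> K"
      using elim norm_triangle_sub[of "S (p s)" "S q"] by (simp add: K_def dist_norm)
    then have "norm (f (p s) - f q) \<le> L * norm (S (p s - q))"
      using L elim q by (simp add: K_def)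
    also have "\<dots> \<le> \<bar>L\<bar> * norm (S (p s) - S q)"
      using lin_op_on_diff[OF lin elim(1) q] by (simp add: mult_right_mono)
    finally show ?case .
  qed
  moreover have "((\<lambda>s. \<bar>L\<bar> * norm (S (p s) - S q)) \<longlongrightarrow> 0) G"
    using tendsto_mult_right_zero[OF tendsto_norm_zero[OF LIM_zero[OF lim]]] .
  ultimately show ?thesis
    by (rule Lim_null_comparison[THEN LIM_zero_cancel])
qed

lemma continuous_on_f_comp:
  assumes "\<And>s. s \<in> X \<Longrightarrow> u s \<in> V" and "continuous_on X (\<lambda>s. S (u s))"
  shows "continuous_on X (\<lambda>s. f (u s))"
  unfolding continuous_on_def
proof
  fix t assume "t \<in> X"
  with assms show "((\<lambda>s. f (u s)) \<longlongrightarrow> f (u t)) (at t within X)"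
    by (intro tendsto_f) (auto simp: continuous_on_def eventually_at_filter)
qed

lemma F_comp_has_real_derivative:
  assumes uV: "\<And>s. s \<in> X \<Longrightarrow> u s \<in> V" and t: "t \<in> X"
    and du: "(u has_vector_derivative u') (at t within X)"
    and cSu: "continuous (at t within X) (\<lambda>s. S (u s))"
  shows "((\<lambda>s. F (u s)) has_real_derivative inner (f (u t)) u') (at t within X)"
proof -
  have "\<exists>p \<in> V. norm (S p - S (u t)) \<le> norm (S (u s) - S (u t)) \<and> F (u s) - F (u t) = inner (f p) (u s - u t)"
    if s: "s \<in> X" for s
  proof -
    obtain \<theta> where \<theta>: "0 < \<theta>" "\<theta> < 1" "F (u s) - F (u t) = inner (f (u t + \<theta> *\<^sub>R (u s - u t))) (u s - u t)"
      using F_mean_value[OF uV[OF t] uV[OF s]] .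
    have d: "u s - u t \<in> V" using subspace_V uV t s subspace_diff by blast
    then have "\<theta> *\<^sub>R (u s - u t) \<in> V" using subspace_V by (simp add: subspace_scale)
    then have "u t + \<theta> *\<^sub>R (u s - u t) \<in> V" and
      "S (u t + \<theta> *\<^sub>R (u s - u t)) - S (u t) = \<theta> *\<^sub>R (S (u s) - S (u t))"
      using lin uV[OF t] uV[OF s] d subspace_V lin_op_on_diff[OF lin uV[OF s] uV[OF t]]
      unfolding lin_op_on_def by (auto simp: subspace_add)
    with \<theta> show ?thesis
      by (intro bexI[of _ "u t + \<theta> *\<^sub>R (u s - u t)"]) (auto simp: mult_left_le_one_le)
  qed
  then obtain \<xi> where \<xi>: "\<And>s. s \<in> X \<Longrightarrow> \<xi> s \<in> V \<and> norm (S (\<xi> s) - S (u t)) \<le> norm (S (u s) - S (u t))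
      \<and> F (u s) - F (u t) = inner (f (\<xi> s)) (u s - u t)"
    by metis
  have evX: "\<forall>\<^sub>F s in at t within X. s \<in> X \<and> s \<noteq> t" by (simp add: eventually_at_filter)
  have "((\<lambda>s. S (\<xi> s) - S (u t)) \<longlongrightarrow> 0) (at t within X)"
    using evX cSu unfolding continuous_within
    by (intro Lim_null_comparison[OF _ tendsto_norm_zero[OF LIM_zero]]) (auto elim!: eventually_mono dest: \<xi>)
  then have "((\<lambda>s. f (\<xi> s)) \<longlongrightarrow> f (u t)) (at t within X)"
    using evX by (intro tendsto_f uV t) (auto simp: LIM_zero_iff elim!: eventually_mono dest: \<xi>)
  then have "((\<lambda>s. inner (f (\<xi> s)) ((u s - u t) /\<^sub>R (s - t))) \<longlongrightarrow> inner (f (u t)) u') (at t within X)"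
    by (intro tendsto_inner tendsto_difference_quotient[OF du])
  moreover have "\<forall>\<^sub>F s in at t within X. inner (f (\<xi> s)) ((u s - u t) /\<^sub>R (s - t)) = (F (u s) - F (u t)) / (s - t)"
    using evX by eventually_elim (simp add: \<xi> divide_inverse_commute)
  ultimately show ?thesis
    unfolding has_field_derivative_iff by (rule Lim_transform_eventually)
qed

end

lemma norm_adjoint_le:
  fixes T :: "'a::real_inner \<Rightarrow>\<^sub>L 'b::real_inner" and T' :: "'b \<Rightarrow>\<^sub>L 'a"
  assumes adj: "\<And>x y. inner (T x) y = inner x (T' y)"
  shows "norm T' \<le> norm T"
proof (rule norm_blinfun_bound)
  fix y
  have "(norm (T' y))\<^sup>2 = inner (T (T' y)) y"
    by (simp add: adj power2_norm_eq_inner)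
  also have "\<dots> \<le> norm T * norm (T' y) * norm y"
    using norm_cauchy_schwarz[of "T (T' y)" y] norm_blinfun[of T "T' y"]
    by (meson mult_right_mono norm_ge_zero order_trans)
  finally show "norm (T' y) \<le> norm T * norm y"
    by (cases "T' y = 0") (auto simp: power2_eq_square mult.assoc)
qed simp

lemma continuous_on_adjoint:
  fixes B :: "real \<Rightarrow> 'a::real_inner \<Rightarrow>\<^sub>L 'b::real_inner" and Bs :: "real \<Rightarrow> 'b \<Rightarrow>\<^sub>L 'a"
  assumes adj: "\<forall>t x y. inner (B t x) y = inner x (Bs t y)" and "continuous_on X B"
  shows "continuous_on X Bs"
proof -
  have "dist (Bs s) (Bs r) \<le> dist (B s) (B r)" for s r
    using norm_adjoint_le[of "B s - B r" "Bs s - Bs r"] adj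
    by (simp add: dist_norm blinfun.diff_left inner_diff_left inner_diff_right)
  with assms(2) show ?thesis
    unfolding continuous_on_iff by (meson le_less_trans)
qed

lemma le_add_of_power2_le_4_mult:
  fixes A B Q :: real
  assumes "0 \<le> A" "0 \<le> B" "Q\<^sup>2 \<le> 4 * A * B"
  shows "Q \<le> A + B"
proof -
  have "(A + B)\<^sup>2 = (A - B)\<^sup>2 + 4 * A * B" by (simp add: power2_eq_square algebra_simps)
  then have "Q\<^sup>2 \<le> (A + B)\<^sup>2" using assms(3) zero_le_power2[of "A - B"] by linarith
  then have "\<bar>Q\<bar> \<le> A + B" using power2_le_imp_le[of "\<bar>Q\<bar>" "A + B"] assms(1,2) by simp
  then show ?thesis by simp
qed

definition bump :: "real \<Rightarrow> real \<Rightarrow> real \<Rightarrow> real" where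
  "bump a T s = (s - a) * (a + T - s) / T"

lemma bump_bounds:
  assumes "T > 0" "a \<le> s" "s \<le> a + T"
  shows "0 \<le> bump a T s" "bump a T s \<le> T / 4"
proof -
  show "0 \<le> bump a T s" using assms by (simp add: bump_def)
  have "4 * ((s - a) * (a + T - s)) \<le> T\<^sup>2"
    using zero_le_power2[of "2 * (s - a) - T"] by (simp add: power2_eq_square algebra_simps)
  then show "bump a T s \<le> T / 4"
    using assms by (simp add: bump_def power2_eq_square field_simps)
qed

lemma bump_endpoints: "bump a T a = 0" "bump a T (a + T) = 0"
  by (simp_all add: bump_def)

lemma has_real_derivative_bump:
  "(bump a T has_real_derivative ((a + T - s) - (s - a)) / T) (at s within X)"
proof -
  have "((\<lambda>s. (s - a) * (a + T - s)) has_real_derivative (a + T - s) - (s - a)) (at s within X)"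
    by (auto intro!: derivative_eq_intros)
  then show ?thesis
    unfolding bump_def[abs_def] by (rule DERIV_cdivide)
qed

lemma abs_bump_derivative_le:
  fixes a s T :: real
  assumes "T > 0" "a \<le> s" "s \<le> a + T"
  shows "\<bar>((a + T - s) - (s - a)) / T\<bar> \<le> 1"
proof -
  have "\<bar>(a + T - s) - (s - a)\<bar> \<le> T" using assms by linarith
  then show ?thesis using assms by (simp add: abs_divide)
qed

lemma has_integral_bump_square:
  assumes T: "T > 0"
  shows "((\<lambda>s. (bump a T s)\<^sup>2) has_integral T ^ 3 / 30) {a..a + T}"
proof -
  define c2 c3 where "c2 = 1 / (2 * T)" and "c3 = 1 / (5 * T\<^sup>2)"
  define A where "A s = (s - a) ^ 3 / 3 - (s - a) ^ 4 * c2 + (s - a) ^ 5 * c3" for s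
  have "(A has_real_derivative (bump a T s)\<^sup>2) (at s within {a..a + T})" for s
  proof -
    have "(A has_real_derivative (s - a)\<^sup>2 - 4 * (s - a) ^ 3 * c2 + 5 * (s - a) ^ 4 * c3)
        (at s within {a..a + T})"
      unfolding A_def by (auto intro!: derivative_eq_intros)
    moreover have "(s - a)\<^sup>2 - 4 * (s - a) ^ 3 * c2 + 5 * (s - a) ^ 4 * c3 = (bump a T s)\<^sup>2"
    proof -
      have "(bump a T s)\<^sup>2 = ((s - a)\<^sup>2 * T\<^sup>2 - 2 * (s - a) ^ 3 * T + (s - a) ^ 4) / T\<^sup>2"
        unfolding bump_def power_divide by (simp add: algebra_simps power2_eq_square power3_eq_cube power4_eq_xxxx)
      also have "\<dots> = (s - a)\<^sup>2 - 4 * (s - a) ^ 3 * c2 + 5 * (s - a) ^ 4 * c3"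
        using T unfolding c2_def c3_def by (simp add: field_simps power2_eq_square)
      finally show ?thesis by simp
    qed
    ultimately show ?thesis by simp
  qed
  then have "((\<lambda>s. (bump a T s)\<^sup>2) has_integral A (a + T) - A a) {a..a + T}"
    using T by (intro fundamental_theorem_of_calculus) (auto simp: has_real_derivative_iff_has_vector_derivative)
  moreover have "A (a + T) - A a = T ^ 3 / 30"
    using T unfolding A_def c2_def c3_def by (simp add: field_simps eval_nat_numeral)
  ultimately show ?thesis by simp
qed

lemma young_damping_term:
  fixes X Z W U M lam :: real
  assumes lam: "lam > 0" and M: "M \<ge> 0" and nn: "0 \<le> Z" "0 \<le> W"
    and WU: "W\<^sup>2 \<le> M * U\<^sup>2" and UX: "lam * U\<^sup>2 \<le> X\<^sup>2"
  shows "Z * W \<le> X\<^sup>2 / 4 + M / lam * Z\<^sup>2"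
proof (rule le_add_of_power2_le_4_mult)
  have "U\<^sup>2 \<le> X\<^sup>2 / lam" using UX lam by (simp add: field_simps)
  then have "W\<^sup>2 \<le> M * (X\<^sup>2 / lam)" using WU M by (meson mult_left_mono order_trans)
  then have "Z\<^sup>2 * W\<^sup>2 \<le> Z\<^sup>2 * (M * (X\<^sup>2 / lam))" by (rule mult_left_mono) simp
  then have "(Z * W)\<^sup>2 \<le> Z\<^sup>2 * (M * (X\<^sup>2 / lam))" by (simp add: power_mult_distrib)
  also have "\<dots> = 4 * (X\<^sup>2 / 4) * (M / lam * Z\<^sup>2)" by (simp add: field_simps)
  finally show "(Z * W)\<^sup>2 \<le> 4 * (X\<^sup>2 / 4) * (M / lam * Z\<^sup>2)" .
qed (use lam M in auto)

lemma young_multiplier_term: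
  fixes P Y U X lam :: real
  assumes lam: "lam > 0" and UX: "lam * U\<^sup>2 \<le> X\<^sup>2"
  shows "2 * P * (Y * U) \<le> P\<^sup>2 * X\<^sup>2 / 4 + 4 * Y\<^sup>2 / lam"
proof (rule le_add_of_power2_le_4_mult)
  have "U\<^sup>2 \<le> X\<^sup>2 / lam" using UX lam by (simp add: field_simps)
  then have "4 * P\<^sup>2 * Y\<^sup>2 * U\<^sup>2 \<le> 4 * P\<^sup>2 * Y\<^sup>2 * (X\<^sup>2 / lam)" by (rule mult_left_mono) simp
  then have "(2 * P * (Y * U))\<^sup>2 \<le> 4 * P\<^sup>2 * Y\<^sup>2 * (X\<^sup>2 / lam)" by (simp add: power_mult_distrib)
  also have "\<dots> = 4 * (P\<^sup>2 * X\<^sup>2 / 4) * (4 * Y\<^sup>2 / lam)" by (simp add: field_simps)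
  finally show "(2 * P * (Y * U))\<^sup>2 \<le> 4 * (P\<^sup>2 * X\<^sup>2 / 4) * (4 * Y\<^sup>2 / lam)" .
qed (use lam in auto)

text \<open>In the application \<open>X, Y, Z, W, U\<close> are the norms of \<open>S u\<close>, \<open>u'\<close>, \<open>B\<^sub>1* u'\<close>, \<open>B\<^sub>1* u\<close>, \<open>u\<close>;
  \<open>G\<close>, \<open>Fv\<close>, \<open>c\<close>, \<open>d\<close> stand for \<open>\<langle>u, f u\<rangle>\<close>, \<open>F u\<close>, \<open>\<langle>B\<^sub>1* u', B\<^sub>1* u\<rangle>\<close>, \<open>\<langle>u', u\<rangle>\<close>;
  and \<open>P\<close>, \<open>P'\<close> are the values of the multiplier and of its derivative.\<close>

lemma observability_pointwise_bound:
  fixes X Y Z W U P P' Fv G c d T m M lam :: real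
  assumes lam: "lam > 0" and m: "m > 0" and M: "M \<ge> 0"
    and P: "0 \<le> P" "P \<le> T / 4" and P': "\<bar>P'\<bar> \<le> 1"
    and GF: "G - Fv \<le> 0" and c: "\<bar>c\<bar> \<le> Z * W" and d: "\<bar>d\<bar> \<le> Y * U"
    and mY: "m * Y\<^sup>2 \<le> Z\<^sup>2" and WU: "W\<^sup>2 \<le> M * U\<^sup>2" and UX: "lam * U\<^sup>2 \<le> X\<^sup>2"
    and nn: "0 \<le> Y" "0 \<le> Z" "0 \<le> W" "0 \<le> U"
  shows "P\<^sup>2 * (1/2 * (X\<^sup>2 + Y\<^sup>2) - Fv) + (P\<^sup>2 * (G - c - X\<^sup>2 + Y\<^sup>2) + 2 * P * P' * d)
         \<le> (4 / (lam * m) + 3 * T\<^sup>2 / (32 * m) + M * T\<^sup>2 / (16 * lam)) * Z\<^sup>2"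
proof -
  have "- c \<le> X\<^sup>2 / 4 + M / lam * Z\<^sup>2"
    using c young_damping_term[OF lam M nn(2,3) WU UX] by linarith
  from mult_left_mono[OF this, of "P\<^sup>2"]
  have damping: "- (P\<^sup>2 * c) \<le> P\<^sup>2 * X\<^sup>2 / 4 + P\<^sup>2 * (M / lam * Z\<^sup>2)"
    by (simp add: algebra_simps)
  have "P' * d \<le> \<bar>P'\<bar> * \<bar>d\<bar>" by (simp flip: abs_mult)
  also have "\<dots> \<le> 1 * \<bar>d\<bar>" by (rule mult_right_mono[OF P']) simp
  also have "\<dots> \<le> Y * U" using d by simp
  finally have "P' * d \<le> Y * U" .
  from mult_left_mono[OF this, of "2 * P"] P
  have multiplier: "2 * P * P' * d \<le> P\<^sup>2 * X\<^sup>2 / 4 + 4 * Y\<^sup>2 / lam"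
    using young_multiplier_term[OF lam UX, of P Y] by (simp add: mult.assoc)
  have "P\<^sup>2 * (G - Fv) \<le> 0" using GF by (simp add: mult_nonneg_nonpos)
  then have "P\<^sup>2 * (1/2 * (X\<^sup>2 + Y\<^sup>2) - Fv) + (P\<^sup>2 * (G - c - X\<^sup>2 + Y\<^sup>2) + 2 * P * P' * d)
      \<le> 3/2 * (P\<^sup>2 * Y\<^sup>2) + P\<^sup>2 * (M / lam * Z\<^sup>2) + 4 * Y\<^sup>2 / lam"
    using damping multiplier by (simp add: algebra_simps)
  also have "\<dots> \<le> 3/2 * ((T\<^sup>2 / 16) * (Z\<^sup>2 / m)) + (T\<^sup>2 / 16) * (M / lam * Z\<^sup>2) + 4 * (Z\<^sup>2 / m) / lam"
  proof -
    have P2: "P\<^sup>2 \<le> T\<^sup>2 / 16" using power_mono[OF P(2) P(1), of 2] by (simp add: power_divide)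
    have Y2: "Y\<^sup>2 \<le> Z\<^sup>2 / m" using mY m by (simp add: field_simps)
    show ?thesis using P2 Y2 M lam
      by (intro add_mono mult_mono mult_left_mono mult_right_mono divide_right_mono) auto
  qed
  also have "\<dots> = (4 / (lam * m) + 3 * T\<^sup>2 / (32 * m) + M * T\<^sup>2 / (16 * lam)) * Z\<^sup>2"
    using lam m by (simp add: field_simps)
  finally show ?thesis .
qed

lemma le_at_right_endpoint:
  fixes g :: "real \<Rightarrow> real"
  assumes "continuous_on {x..b} g" "x < b" "\<And>y. y \<in> {x..<b} \<Longrightarrow> g y \<le> c"
  shows "g b \<le> c"
  using continuous_le_on_closure[of "{x..<b}" g b c] assms by simp

lemma continuous_barrier:
  fixes E w :: "real \<Rightarrow> real"
  assumes cE: "continuous_on {c..d} E" and cw: "continuous_on {c..d} w" and start: "E c < w c"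
    and step: "\<And>x. c < x \<Longrightarrow> x < d \<Longrightarrow> \<forall>s\<in>{c..x}. E s \<le> w s \<Longrightarrow> E x < w x"
    and t: "t \<in> {c..<d}"
  shows "E t < w t"
proof (rule ccontr)
  assume "\<not> E t < w t"
  define B where "B = {c..t} \<inter> (\<lambda>s. E s - w s) -` {0..}"
  have cont: "continuous_on {c..t} (\<lambda>s. E s - w s)"
    using t by (intro continuous_intros continuous_on_subset[OF cE] continuous_on_subset[OF cw]) auto
  have "closed B" unfolding B_def by (rule continuous_closed_preimage[OF cont]) auto
  moreover have "t \<in> B" "bdd_below B"
    using \<open>\<not> E t < w t\<close> t unfolding B_def by (auto intro: bdd_belowI[of _ c])
  ultimately have "Inf B \<in> B" by (auto intro: closed_contains_Inf)
  define ts where "ts = Inf B"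
  have ts: "c \<le> ts" "ts \<le> t" "w ts \<le> E ts" using \<open>Inf B \<in> B\<close> unfolding ts_def B_def by auto
  have below: "E s < w s" if s: "s \<in> {c..<ts}" for s
  proof (rule ccontr)
    assume "\<not> E s < w s"
    then have "s \<in> B" unfolding B_def using s ts by auto
    then have "ts \<le> s" unfolding ts_def by (rule cInf_lower) fact
    then show False using s by simp
  qed
  have "c < ts" using ts start by (cases "c = ts") auto
  have "(\<lambda>s. E s - w s) ts \<le> 0"
  proof (rule le_at_right_endpoint[OF _ \<open>c < ts\<close>])
    show "continuous_on {c..ts} (\<lambda>s. E s - w s)" using continuous_on_subset[OF cont] ts by auto
    show "E s - w s \<le> 0" if "s \<in> {c..<ts}" for s using below[OF that] by simp
  qed
  then have "\<forall>s\<in>{c..ts}. E s \<le> w s"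
    using below by (auto simp: less_eq_real_def)
  then have "E ts < w ts" using step \<open>c < ts\<close> ts t by auto
  with ts show False by simp
qed

lemma strict_mono_block_containing:
  fixes tt :: "nat \<Rightarrow> real"
  assumes mono: "strict_mono tt" and lim: "filterlim tt at_top sequentially" and "tt N0 \<le> t"
  obtains j where "N0 \<le> j" "tt j \<le> t" "t < tt (Suc j)"
proof -
  have "\<forall>\<^sub>F j in sequentially. t < tt j"
    using lim by (simp add: filterlim_at_top_dense)
  then have "\<exists>J. t < tt J" by (auto simp: eventually_sequentially)
  define J where "J = (LEAST J. t < tt J)"
  have J: "t < tt J" unfolding J_def by (rule LeastI_ex) fact
  then have "N0 < J"
    using \<open>tt N0 \<le> t\<close> strict_mono_less_eq[OF mono, of J N0] by linarith
  then obtain j where "J = Suc j" "N0 \<le> j" by (cases J) auto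
  moreover have "\<not> t < tt j" using \<open>J = Suc j\<close> not_less_Least[of j "\<lambda>J. t < tt J"] unfolding J_def by simp
  ultimately show ?thesis using that J by simp
qed

lemma tendsto_zero_by_blocks:
  fixes tt A :: "nat \<Rightarrow> real" and g :: "real \<Rightarrow> real"
  assumes "strict_mono tt" "filterlim tt at_top sequentially" "A \<longlonglongrightarrow> 0"
    and bound: "\<And>N t. tt N \<le> t \<Longrightarrow> t \<le> tt (Suc N) \<Longrightarrow> \<bar>g t\<bar> \<le> A N"
  shows "(g \<longlongrightarrow> 0) at_top"
proof (rule tendstoI)
  fix e :: real assume "0 < e"
  then obtain N0 where N0: "\<And>N. N0 \<le> N \<Longrightarrow> A N < e"
    using order_tendstoD(2)[OF assms(3)] by (auto simp: eventually_sequentially)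
  show "\<forall>\<^sub>F t in at_top. dist (g t) 0 < e"
    unfolding eventually_at_top_linorder
  proof (intro exI allI impI)
    fix t assume "tt N0 \<le> t"
    then obtain j where "N0 \<le> j" "tt j \<le> t" "t < tt (Suc j)"
      using strict_mono_block_containing assms(1,2) by blast
    then show "dist (g t) 0 < e" using bound[of j t] N0[of j] by simp
  qed
qed

lemma continuous_on_Ico_of_differentiable_extension:
  assumes "\<exists>g g'. (\<forall>s\<in>{a..b}. (g has_vector_derivative g' s) (at s within {a..b}))
      \<and> continuous_on {a..b} g' \<and> (\<forall>s\<in>{a..<b}. g s = B s)"
  shows "continuous_on {a..<b} B"
proof -
  obtain g g' where g: "\<forall>s\<in>{a..b}. (g has_vector_derivative g' s) (at s within {a..b})"
    and eq: "\<forall>s\<in>{a..<b}. g s = B s"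
    using assms by blast
  have "continuous_on {a..b} g"
    unfolding continuous_on_eq_continuous_within using g has_vector_derivative_continuous by blast
  then have "continuous_on {a..<b} g" by (rule continuous_on_subset) auto
  then show ?thesis using eq continuous_on_eq by blast
qed

section \<open>Energy decay under intermittent damping and delay\<close>

locale intermittent_delay_problem = potential_nonlinearity V S f F
  for V :: "'h::real_inner set" and S f F +
  fixes B1 B1s :: "real \<Rightarrow> 'h \<Rightarrow>\<^sub>L 'h"
    and B2 :: "real \<Rightarrow> 'u::real_inner \<Rightarrow>\<^sub>L 'h" and B2s :: "real \<Rightarrow> 'h \<Rightarrow>\<^sub>L 'u"
    and tt m M :: "nat \<Rightarrow> real" and \<tau> lam1 :: real
    and u0 u1 :: 'h and u u' :: "real \<Rightarrow> 'h"
  assumes lam_pos: "lam1 > 0"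
    and poincare: "\<forall>v\<in>V. lam1 * (norm v)\<^sup>2 \<le> (norm (S v))\<^sup>2"
    and B1_adj: "\<forall>t x y. inner (B1 t x) y = inner x (B1s t y)"
    and B2_adj: "\<forall>t x y. inner (B2 t x) y = inner x (B2s t y)"
    and tt0: "tt 0 = 0" and tt_mono: "strict_mono tt"
    and B2_off: "\<forall>n. \<forall>t\<in>{tt (2*n)..<tt (2*n+1)}. B2 t = 0"
    and B1_off: "\<forall>n. \<forall>t\<in>{tt (2*n+1)..<tt (2*n+2)}. B1 t = 0"
    and B1_cont: "\<And>n. continuous_on {tt (2*n)..<tt (2*n+1)} B1"
    and B2_cont: "\<And>n. continuous_on {tt (2*n+1)..<tt (2*n+2)} B2"
    and cond_i: "\<forall>n. 0 < m (2*n) \<and> m (2*n) \<le> M (2*n) \<and>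
        (\<forall>t\<in>{tt (2*n)..<tt (2*n+1)}. \<forall>x.
           m (2*n) * (norm x)\<^sup>2 \<le> (norm (B1s t x))\<^sup>2 \<and> (norm (B1s t x))\<^sup>2 \<le> M (2*n) * (norm x)\<^sup>2)"
    and cond_ii: "\<forall>n. 0 < M (2*n+1) \<and>
        (\<forall>t\<in>{tt (2*n+1)..<tt (2*n+2)}. \<forall>x. (norm (B2s t x))\<^sup>2 \<le> M (2*n+1) * (norm x)\<^sup>2)"
    and tau_pos: "\<tau> > 0" and tau_le: "\<forall>n. \<tau> \<le> tt (2*n+1) - tt (2*n)"
    and F0: "F 0 = 0"
    and NL1: "\<forall>x\<in>V. inner x (f x) \<le> 0"
    and NL2: "\<forall>x\<in>V. inner x (f x) - F x \<le> 0"
    and sol: "delayed_wave_solution V S B1 B1s B2 B2s \<tau> f u0 u1 u u'"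
begin

definition forcing :: "real \<Rightarrow> 'h" where
  "forcing s = f (u s) - B1 s (B1s s (u' s)) - B2 s (B2s s (u' (s - \<tau>)))"

abbreviation E :: "real \<Rightarrow> real" where
  "E \<equiv> energy_S S F u u'"

lemma tt_nonneg: "0 \<le> tt n"
  using strict_mono_less_eq[OF tt_mono, of 0 n] tt0 by simp

lemma tt_less: "tt n < tt (Suc n)"
  using strict_monoD[OF tt_mono] by simp

lemma u_in_V: "0 \<le> t \<Longrightarrow> u t \<in> V"
  and continuous_on_u: "continuous_on {0..} u"
  and continuous_on_S_u: "continuous_on {0..} (\<lambda>t. S (u t))"
  and continuous_on_u': "continuous_on {0..} u'"
  and u_has_derivative: "0 \<le> t \<Longrightarrow> (u has_vector_derivative u' t) (at t within {0..})"
  using sol unfolding delayed_wave_solution_def by auto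

lemma weak_solution_on:
  assumes "0 \<le> x" "x \<le> y" and "continuous_on {x..y} forcing"
  shows "wave_weak_solution V S x y u u' forcing"
proof
  have sub: "{x..y} \<subseteq> {0..}" using assms by auto
  show "x \<le> y" "continuous_on {x..y} forcing" by fact+
  show "u s \<in> V" if "s \<in> {x..y}" for s using u_in_V that assms by auto
  show "continuous_on {x..y} u" "continuous_on {x..y} (\<lambda>s. S (u s))" "continuous_on {x..y} u'"
    using continuous_on_subset[OF _ sub] continuous_on_u continuous_on_S_u continuous_on_u' by auto
  show "(u has_vector_derivative u' s) (at s within {x..y})" if "s \<in> {x..y}" for s
    using has_vector_derivative_within_subset[OF u_has_derivative sub] that assms by auto
  fix \<phi> z assume "\<phi> \<in> V" "z \<in> {x..y}"
  have "(\<lambda>s. inner (forcing s) \<phi> - inner (S (u s)) (S \<phi>)) = (\<lambda>s. inner (f (u s)) \<phi> - inner (S (u s)) (S \<phi>)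
      - inner (B1 s (B1s s (u' s))) \<phi> - inner (B2 s (B2s s (u' (s - \<tau>)))) \<phi>)"
    by (simp add: fun_eq_iff forcing_def inner_diff_left)
  then have "((\<lambda>s. inner (forcing s) \<phi> - inner (S (u s)) (S \<phi>)) has_integral inner (u' w) \<phi> - inner (u' 0) \<phi>) {0..w}"
    if "w \<in> {0..z}" for w
    using sol \<open>\<phi> \<in> V\<close> that unfolding delayed_wave_solution_def by auto
  then show "((\<lambda>s. inner (forcing s) \<phi> - inner (S (u s)) (S \<phi>)) has_integral inner (u' z) \<phi> - inner (u' x) \<phi>) {x..z}"
    using has_integral_change_base_point[of 0 z _ "\<lambda>w. inner (u' w) \<phi>" x] assms \<open>z \<in> {x..y}\<close> by auto
qed

lemma F_u_has_derivative:
  "0 \<le> t \<Longrightarrow> ((\<lambda>s. F (u s)) has_real_derivative inner (f (u t)) (u' t)) (at t within {0..})"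
  using continuous_on_S_u by (intro F_comp_has_real_derivative u_in_V u_has_derivative)
    (auto simp: continuous_on_eq_continuous_within)

lemma continuous_on_E: "continuous_on {0..} E"
proof -
  have "continuous_on {0..} (\<lambda>s. F (u s))"
    using DERIV_continuous[OF F_u_has_derivative] by (simp add: continuous_on_eq_continuous_within)
  then show ?thesis
    unfolding energy_S_def by (intro continuous_intros continuous_on_S_u continuous_on_u')
qed

lemma energy_bounds:
  assumes "0 \<le> t"
  shows "(norm (u' t))\<^sup>2 \<le> 2 * E t" and "0 \<le> E t"
proof -
  have F: "F (u t) \<le> 0" using F_nonpos[OF F0 NL1 u_in_V[OF assms]] .
  have arith: "Y \<le> 2 * (1/2 * (X + Y) - G) \<and> 0 \<le> 1/2 * (X + Y) - G"
    if "G \<le> 0" "0 \<le> X" "0 \<le> Y" for X Y G :: real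
    using that by (simp add: algebra_simps)
  note * = arith[OF F zero_le_power2[of "norm (S (u t))"] zero_le_power2[of "norm (u' t)"]]
  show "(norm (u' t))\<^sup>2 \<le> 2 * E t" using * unfolding energy_S_def by blast
  show "0 \<le> E t" using * unfolding energy_S_def by blast
qed

lemma energy_identity:
  assumes "0 \<le> x" "x \<le> y" and "continuous_on {x..y} forcing"
  shows "((\<lambda>s. inner (f (u s) - forcing s) (u' s)) has_integral E x - E y) {x..y}"
proof -
  interpret wave_weak_solution V S x y u u' forcing
    using weak_solution_on[OF assms] .
  have "((\<lambda>s. inner (f (u s)) (u' s)) has_integral F (u y) - F (u x)) {x..y}"
  proof (rule fundamental_theorem_of_calculus[OF \<open>x \<le> y\<close>])
    fix s assume "s \<in> {x..y}"
    then show "((\<lambda>s. F (u s)) has_vector_derivative inner (f (u s)) (u' s)) (at s within {x..y})"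
      using DERIV_subset[OF F_u_has_derivative, of s "{x..y}"] assms
      by (auto simp: has_real_derivative_iff_has_vector_derivative)
  qed
  from has_integral_diff[OF this has_integral_mult_right[OF energy_equality, of "1/2"]]
  show ?thesis
    unfolding energy_S_def by (simp add: inner_diff_left power2_norm_eq_inner algebra_simps)
qed

abbreviation len :: "nat \<Rightarrow> real" where
  "len n \<equiv> tt (Suc n) - tt n"

definition observability_constant :: "nat \<Rightarrow> real" where
  "observability_constant n = 4 / (lam1 * m (2*n)) + 3 * (len (2*n))\<^sup>2 / (32 * m (2*n))
     + M (2*n) * (len (2*n))\<^sup>2 / (16 * lam1)"

lemma observability_constant_pos: "0 < observability_constant n"
proof -
  have "0 < m (2*n)" "m (2*n) \<le> M (2*n)" using cond_i by blast+
  then show ?thesis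
    using lam_pos unfolding observability_constant_def
    by (intro add_pos_nonneg) (auto intro!: divide_nonneg_pos mult_nonneg_nonneg)
qed

lemma forcing_even:
  assumes "s \<in> {tt (2*n)..<tt (2*n+1)}"
  shows "forcing s = f (u s) - B1 s (B1s s (u' s))"
  using B2_off assms by (simp add: forcing_def)

lemma continuous_on_forcing_even: "continuous_on {tt (2*n)..<tt (2*n+1)} forcing"
proof -
  let ?I = "{tt (2*n)..<tt (2*n+1)}"
  have sub: "?I \<subseteq> {0..}" using tt_nonneg[of "2*n"] by auto
  have fu: "continuous_on ?I (\<lambda>s. f (u s))"
  proof (rule continuous_on_f_comp)
    show "u s \<in> V" if "s \<in> ?I" for s using u_in_V that sub by auto
    show "continuous_on ?I (\<lambda>s. S (u s))" using continuous_on_subset[OF continuous_on_S_u sub] .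
  qed
  have B1s: "continuous_on ?I B1s"
    using continuous_on_adjoint[OF B1_adj B1_cont] .
  have "continuous_on ?I (\<lambda>s. B1 s (B1s s (u' s)))"
    using B1_cont B1s continuous_on_subset[OF continuous_on_u' sub]
    by (intro bounded_bilinear.continuous_on[OF bounded_bilinear_blinfun_apply]) 
  with fu have "continuous_on ?I (\<lambda>s. f (u s) - B1 s (B1s s (u' s)))"
    by (rule continuous_on_diff)
  then show ?thesis
    by (rule continuous_on_eq) (simp add: forcing_even)
qed

lemma dissipation_even:
  assumes "s \<in> {tt (2*n)..<tt (2*n+1)}"
  shows "inner (f (u s) - forcing s) (u' s) = (norm (B1s s (u' s)))\<^sup>2"
  using forcing_even[OF assms] B1_adj by (simp add: power2_norm_eq_inner)

lemma energy_antimono_even: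
  assumes "tt (2*n) \<le> x" "x \<le> y" "y \<le> tt (2*n+1)"
  shows "E y \<le> E x"
proof -
  have before_end: "E y' \<le> E x" if "x \<le> y'" "y' < tt (2*n+1)" for y'
  proof -
    have "{x..y'} \<subseteq> {tt (2*n)..<tt (2*n+1)}" using assms that by auto
    then have "continuous_on {x..y'} forcing"
      using continuous_on_subset[OF continuous_on_forcing_even] by blast
    then have "((\<lambda>s. inner (f (u s) - forcing s) (u' s)) has_integral E x - E y') {x..y'}"
      using energy_identity tt_nonneg[of "2*n"] assms that by auto
    moreover have "0 \<le> inner (f (u s) - forcing s) (u' s)" if "s \<in> {x..y'}" for s
      using dissipation_even[of s n] that assms \<open>y' < tt (2*n+1)\<close> by auto
    ultimately have "0 \<le> E x - E y'" by (rule has_integral_nonneg)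
    then show ?thesis by simp
  qed
  show ?thesis
  proof (cases "y < tt (2*n+1)")
    case False
    then have "y = tt (2*n+1)" using assms by simp
    show ?thesis
    proof (cases "x = y")
      case False
      have "continuous_on {x..y} E"
        using continuous_on_subset[OF continuous_on_E] tt_nonneg[of "2*n"] assms by auto
      then show ?thesis
        using le_at_right_endpoint[of x y E "E x"] before_end False assms \<open>y = tt (2*n+1)\<close> by simp
    qed simp
  qed (use before_end assms in simp)
qed

lemma observability_integrand_bound:
  assumes s: "s \<in> {tt (2*n)..<tt (2*n+1)}"
    and P: "0 \<le> P" "P \<le> len (2*n) / 4" and P': "\<bar>P'\<bar> \<le> 1"
  shows "P\<^sup>2 * E s + (2 * P * P' * inner (u' s) (u s)
      + P\<^sup>2 * (inner (forcing s) (u s) - inner (S (u s)) (S (u s)) + inner (u' s) (u' s)))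
    \<le> observability_constant n * (norm (B1s s (u' s)))\<^sup>2"
proof -
  have uV: "u s \<in> V" using u_in_V tt_nonneg[of "2*n"] s by auto
  have bounds: "0 < m (2*n)" "m (2*n) \<le> M (2*n)"
    "m (2*n) * (norm (u' s))\<^sup>2 \<le> (norm (B1s s (u' s)))\<^sup>2"
    "(norm (B1s s (u s)))\<^sup>2 \<le> M (2*n) * (norm (u s))\<^sup>2"
    using cond_i s by auto
  have "inner (B1 s (B1s s (u' s))) (u s) = inner (B1s s (u' s)) (B1s s (u s))"
    using B1_adj by blast
  then have forcing_u: "inner (forcing s) (u s) = inner (u s) (f (u s)) - inner (B1s s (u' s)) (B1s s (u s))"
    using forcing_even[OF s] by (simp add: inner_diff_left inner_diff_right inner_commute)
  have "P\<^sup>2 * E s + (2 * P * P' * inner (u' s) (u s)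
      + P\<^sup>2 * (inner (forcing s) (u s) - inner (S (u s)) (S (u s)) + inner (u' s) (u' s)))
    = P\<^sup>2 * (1/2 * ((norm (S (u s)))\<^sup>2 + (norm (u' s))\<^sup>2) - F (u s))
      + (P\<^sup>2 * (inner (u s) (f (u s)) - inner (B1s s (u' s)) (B1s s (u s))
        - (norm (S (u s)))\<^sup>2 + (norm (u' s))\<^sup>2) + 2 * P * P' * inner (u' s) (u s))"
    unfolding forcing_u by (simp add: energy_S_def power2_norm_eq_inner algebra_simps)
  also have "\<dots> \<le> observability_constant n * (norm (B1s s (u' s)))\<^sup>2"
    unfolding observability_constant_def
  proof (rule observability_pointwise_bound[where X = "norm (S (u s))" and Y = "norm (u' s)"
        and Z = "norm (B1s s (u' s))" and W = "norm (B1s s (u s))" and U = "norm (u s)"])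
    show "inner (u s) (f (u s)) - F (u s) \<le> 0" using NL2 uV by blast
    show "lam1 * (norm (u s))\<^sup>2 \<le> (norm (S (u s)))\<^sup>2" using poincare uV by blast
  qed (use lam_pos bounds P P' in \<open>auto simp: Cauchy_Schwarz_ineq2\<close>)
  finally show ?thesis .
qed

lemma observability_before_end:
  assumes b: "tt (2*n) < b" "b < tt (2*n+1)"
  defines "K \<equiv> observability_constant n"
  shows "E b * ((b - tt (2*n)) ^ 3 / 30 + K) \<le> K * E (tt (2*n))"
proof -
  let ?a = "tt (2*n)" and ?T = "b - tt (2*n)"
  let ?P = "bump ?a ?T" and ?P' = "\<lambda>s. ((?a + ?T - s) - (s - ?a)) / ?T"
  have T: "0 < ?T" "?T \<le> len (2*n)" "?a + ?T = b" using b by auto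
  have ab: "{?a..b} \<subseteq> {tt (2*n)..<tt (2*n+1)}" using b by auto
  have forcing: "continuous_on {?a..b} forcing"
    using continuous_on_subset[OF continuous_on_forcing_even ab] .
  interpret W: wave_weak_solution V S ?a b u u' forcing
    using weak_solution_on[OF tt_nonneg _ forcing] b by simp
  have multiplier: "((\<lambda>s. 2 * ?P s * ?P' s * inner (u' s) (u s) + (?P s)\<^sup>2 *
      (inner (forcing s) (u s) - inner (S (u s)) (S (u s)) + inner (u' s) (u' s))) has_integral 0) {?a..b}"
  proof (rule W.has_integral_multiplier[OF has_real_derivative_bump])
    show "?P ?a = 0" "?P b = 0" using bump_endpoints[of ?a ?T] T(3) by simp_all
  qed
  have dissipation: "((\<lambda>s. (norm (B1s s (u' s)))\<^sup>2) has_integral E ?a - E b) {?a..b}"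
  proof (rule has_integral_eq[OF _ energy_identity[OF tt_nonneg _ forcing]])
    show "inner (f (u s) - forcing s) (u' s) = (norm (B1s s (u' s)))\<^sup>2" if "s \<in> {?a..b}" for s
      using dissipation_even[of s n] that ab by blast
  qed (use b in simp)
  have "continuous_on {?a..b} (\<lambda>s. (?P s)\<^sup>2 * E s)"
    unfolding bump_def using continuous_on_subset[OF continuous_on_E] tt_nonneg[of "2*n"] b
    by (intro continuous_intros) auto
  then obtain I where I: "((\<lambda>s. (?P s)\<^sup>2 * E s) has_integral I) {?a..b}"
    using integrable_continuous_real by blast
  have "?T ^ 3 / 30 * E b \<le> I"
  proof (rule has_integral_le[OF has_integral_mult_left I])
    show "((\<lambda>s. (?P s)\<^sup>2) has_integral ?T ^ 3 / 30) {?a..b}"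
      using has_integral_bump_square[OF T(1), of ?a] T by simp
    show "(?P s)\<^sup>2 * E b \<le> (?P s)\<^sup>2 * E s" if "s \<in> {?a..b}" for s
      using energy_antimono_even[of n s b] that b by (simp add: mult_left_mono)
  qed
  also have "I + 0 \<le> K * (E ?a - E b)"
  proof (rule has_integral_le[OF has_integral_add[OF I multiplier] has_integral_mult_right[OF dissipation]])
    fix s assume s: "s \<in> {?a..b}"
    then have "0 \<le> ?P s" "?P s \<le> len (2*n) / 4" "\<bar>?P' s\<bar> \<le> 1"
      using bump_bounds[OF T(1), of ?a s] abs_bump_derivative_le[OF T(1), of ?a s] T by auto
    then show "(?P s)\<^sup>2 * E s + (2 * ?P s * ?P' s * inner (u' s) (u s) + (?P s)\<^sup>2 *
        (inner (forcing s) (u s) - inner (S (u s)) (S (u s)) + inner (u' s) (u' s)))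
      \<le> K * (norm (B1s s (u' s)))\<^sup>2"
      unfolding K_def using observability_integrand_bound ab s by blast
  qed
  finally show ?thesis by (simp add: algebra_simps)
qed

definition even_decay_factor :: "nat \<Rightarrow> real" where
  "even_decay_factor n = 1 / (1 + (len (2*n)) ^ 3 / 30 * (1 / observability_constant n))"

lemma energy_decay_even: "E (tt (2*n+1)) \<le> even_decay_factor n * E (tt (2*n))"
proof -
  let ?a = "tt (2*n)" and ?b = "tt (2*n+1)" and ?K = "observability_constant n"
  have ab: "?a < ?b" using tt_less[of "2*n"] by simp
  have "E ?b * ((?b - ?a) ^ 3 / 30 + ?K) \<le> ?K * E ?a"
  proof (rule le_at_right_endpoint[OF _ ab])
    show "continuous_on {?a..?b} (\<lambda>y. E y * ((y - ?a) ^ 3 / 30 + ?K))"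
      using continuous_on_subset[OF continuous_on_E] tt_nonneg[of "2*n"] by (intro continuous_intros) auto
    show "E y * ((y - ?a) ^ 3 / 30 + ?K) \<le> ?K * E ?a" if "y \<in> {?a..<?b}" for y
      using observability_before_end[of n y] that by (cases "y = ?a") auto
  qed
  moreover have "0 < (?b - ?a) ^ 3 / 30 + ?K"
    using ab observability_constant_pos[of n] by (simp add: add_pos_pos)
  ultimately show ?thesis
    using observability_constant_pos[of n]
    by (simp add: even_decay_factor_def pos_le_divide_eq field_simps)
qed

lemma forcing_odd:
  assumes "s \<in> {tt (2*n+1)..<tt (2*n+2)}"
  shows "forcing s = f (u s) - B2 s (B2s s (u' (s - \<tau>)))"
  using B1_off assms by (simp add: forcing_def)

lemma tt_le_delayed_time:
  assumes "s \<in> {tt (2*n+1)..<tt (2*n+2)}"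
  shows "tt (2*n) \<le> s - \<tau>"
  using tau_le[rule_format, of n] assms by simp

lemma continuous_on_forcing_odd: "continuous_on {tt (2*n+1)..<tt (2*n+2)} forcing"
proof -
  let ?I = "{tt (2*n+1)..<tt (2*n+2)}"
  have sub: "?I \<subseteq> {0..}" using tt_nonneg[of "2*n+1"] by auto
  have fu: "continuous_on ?I (\<lambda>s. f (u s))"
  proof (rule continuous_on_f_comp)
    show "u s \<in> V" if "s \<in> ?I" for s using u_in_V that sub by auto
    show "continuous_on ?I (\<lambda>s. S (u s))" using continuous_on_subset[OF continuous_on_S_u sub] .
  qed
  have B2s: "continuous_on ?I B2s"
    using continuous_on_adjoint[OF B2_adj B2_cont] .
  have "s - \<tau> \<in> {0..}" if "s \<in> ?I" for s
    using tt_le_delayed_time[OF that] tt_nonneg[of "2*n"] by simp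
  then have "(\<lambda>s. s - \<tau>) ` ?I \<subseteq> {0..}" by blast
  moreover have "continuous_on ?I (\<lambda>s. s - \<tau>)" by (intro continuous_intros)
  ultimately have "continuous_on ?I (\<lambda>s. u' (s - \<tau>))"
    using continuous_on_compose2[OF continuous_on_u'] by blast
  then have "continuous_on ?I (\<lambda>s. B2 s (B2s s (u' (s - \<tau>))))"
    using B2_cont B2s by (intro bounded_bilinear.continuous_on[OF bounded_bilinear_blinfun_apply])
  with fu have "continuous_on ?I (\<lambda>s. f (u s) - B2 s (B2s s (u' (s - \<tau>))))"
    by (rule continuous_on_diff)
  then show ?thesis
    by (rule continuous_on_eq) (simp add: forcing_odd)
qed

lemma energy_production_odd:
  assumes s: "s \<in> {tt (2*n+1)..<tt (2*n+2)}"
  shows "- inner (f (u s) - forcing s) (u' s) \<le> M (2*n+1) * (E (s - \<tau>) + E s)"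
proof -
  let ?M = "M (2*n+1)" and ?x = "u' (s - \<tau>)" and ?y = "u' s"
  have M: "0 < ?M" and B2s: "\<And>x. (norm (B2s s x))\<^sup>2 \<le> ?M * (norm x)\<^sup>2"
    using cond_ii s by auto
  have "- inner (f (u s) - forcing s) (u' s) = - inner (B2s s ?x) (B2s s ?y)"
    using forcing_odd[OF s] B2_adj by simp
  also have "\<dots> \<le> norm (B2s s ?x) * norm (B2s s ?y)"
    using Cauchy_Schwarz_ineq2[of "B2s s ?x" "B2s s ?y"] by linarith
  also have "\<dots> \<le> ((norm (B2s s ?x))\<^sup>2 + (norm (B2s s ?y))\<^sup>2) / 2"
    using zero_le_power2[of "norm (B2s s ?x) - norm (B2s s ?y)"] by (simp add: power2_diff)
  also have "\<dots> \<le> ?M * ((norm ?x)\<^sup>2 + (norm ?y)\<^sup>2) / 2"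
    using B2s[of ?x] B2s[of ?y] by (simp add: distrib_left)
  also have "\<dots> \<le> ?M * (E (s - \<tau>) + E s)"
  proof -
    have "0 \<le> s - \<tau>" using tt_le_delayed_time[OF s] tt_nonneg[of "2*n"] by linarith
    then have "(norm ?x)\<^sup>2 + (norm ?y)\<^sup>2 \<le> 2 * (E (s - \<tau>) + E s)"
      using energy_bounds(1)[of "s - \<tau>"] energy_bounds(1)[of s] tau_pos by simp
    from mult_left_mono[OF this, of ?M] M show ?thesis by simp
  qed
  finally show ?thesis .
qed

lemma energy_production_below_barrier_odd:
  assumes s: "s \<in> {tt (2*n+1)..<tt (2*n+2)}"
    and below: "\<forall>r\<in>{tt (2*n+1)..s}. E r \<le> w r"
    and w_mono: "\<And>r r'. r \<le> r' \<Longrightarrow> w r \<le> w r'" and w_nonneg: "\<And>r. 0 \<le> w r"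
  shows "- inner (f (u s) - forcing s) (u' s) \<le> M (2*n+1) * E (tt (2*n)) + 2 * M (2*n+1) * w s"
proof -
  have "E (s - \<tau>) \<le> E (tt (2*n)) + w s"
    \<comment> \<open>As \<open>\<tau> \<le> T (2*n)\<close>, a delayed time before \<open>tt (2*n+1)\<close> lies in the preceding damped interval.\<close>
  proof (cases "s - \<tau> \<le> tt (2*n+1)")
    case True
    then have "E (s - \<tau>) \<le> E (tt (2*n))"
      using energy_antimono_even[of n "tt (2*n)" "s - \<tau>"] tt_le_delayed_time[OF s] by auto
    then show ?thesis using w_nonneg[of s] by simp
  next
    case False
    then have "E (s - \<tau>) \<le> w (s - \<tau>)" using below s tau_pos by auto
    then show ?thesis
      using w_mono[of "s - \<tau>" s] tau_pos energy_bounds(2)[OF tt_nonneg, of "2*n"] by simp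
  qed
  moreover have "E s \<le> w s" using below s by auto
  ultimately have "E (s - \<tau>) + E s \<le> E (tt (2*n)) + w s + w s" by linarith
  then have "M (2*n+1) * (E (s - \<tau>) + E s) \<le> M (2*n+1) * (E (tt (2*n)) + w s + w s)"
    by (rule mult_left_mono) (use cond_ii in \<open>blast intro: less_imp_le\<close>)
  then show ?thesis using energy_production_odd[OF s] by (simp add: algebra_simps)
qed

lemma energy_below_barrier_odd:
  assumes \<epsilon>: "0 < \<epsilon>" and t: "t \<in> {tt (2*n+1)..<tt (2*n+2)}"
  defines "\<beta> \<equiv> E (tt (2*n+1)) + M (2*n+1) * len (2*n+1) * E (tt (2*n))"
  shows "E t < (\<beta> + \<epsilon>) * exp (2 * M (2*n+1) * (t - tt (2*n+1)))"
proof -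
  let ?a = "tt (2*n)" and ?c = "tt (2*n+1)" and ?d = "tt (2*n+2)" and ?M = "M (2*n+1)"
  define w where "w t = (\<beta> + \<epsilon>) * exp (2 * ?M * (t - ?c))" for t
  have M: "0 < ?M" using cond_ii by blast
  have cd: "?c < ?d" using tt_less[of "2*n+1"] by simp
  have Ea: "0 \<le> E ?a" and Ec: "0 \<le> E ?c" using energy_bounds(2) tt_nonneg by auto
  have "E ?c \<le> \<beta>" using M Ea cd by (simp add: \<beta>_def)
  then have w_pos: "0 < w s" and w_mono: "s \<le> s' \<Longrightarrow> w s \<le> w s'" for s s'
    using Ec \<epsilon> M by (auto simp: w_def)
  have "E t < w t"
  proof (rule continuous_barrier[OF _ _ _ _ t])
    show "continuous_on {?c..?d} E" using continuous_on_subset[OF continuous_on_E] tt_nonneg by auto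
    show "continuous_on {?c..?d} w" unfolding w_def by (intro continuous_intros)
    show "E ?c < w ?c" using \<open>E ?c \<le> \<beta>\<close> \<epsilon> by (simp add: w_def)
    fix x assume x: "?c < x" "x < ?d" and below: "\<forall>s\<in>{?c..x}. E s \<le> w s"
    have sub: "{?c..x} \<subseteq> {?c..<?d}" using x by auto
    have "((\<lambda>s. - inner (f (u s) - forcing s) (u' s)) has_integral - (E ?c - E x)) {?c..x}"
      using has_integral_neg[OF energy_identity[OF tt_nonneg _ continuous_on_subset[OF continuous_on_forcing_odd sub]]]
        x by simp
    moreover have "((\<lambda>s. ?M * E ?a + 2 * ?M * w s) has_integral (x - ?c) * (?M * E ?a) + (w x - w ?c)) {?c..x}"
    proof (rule has_integral_add)
      show "((\<lambda>s. ?M * E ?a) has_integral (x - ?c) * (?M * E ?a)) {?c..x}"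
        using has_integral_const_real[of "?M * E ?a" ?c x] x by simp
      have "(w has_real_derivative 2 * ?M * w s) (at s within {?c..x})" for s
        unfolding w_def by (auto intro!: derivative_eq_intros)
      then show "((\<lambda>s. 2 * ?M * w s) has_integral w x - w ?c) {?c..x}"
        using x by (intro fundamental_theorem_of_calculus) (auto simp: has_real_derivative_iff_has_vector_derivative)
    qed
    moreover have "- inner (f (u s) - forcing s) (u' s) \<le> ?M * E ?a + 2 * ?M * w s" if "s \<in> {?c..x}" for s
      using energy_production_below_barrier_odd[of s n w] below w_mono w_pos that sub
      by (auto simp: less_imp_le)
    ultimately have "- (E ?c - E x) \<le> (x - ?c) * (?M * E ?a) + (w x - w ?c)"
      by (rule has_integral_le)
    moreover have "(x - ?c) * (?M * E ?a) \<le> len (2*n+1) * (?M * E ?a)"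
      using x M Ea by (intro mult_right_mono) auto
    ultimately show "E x < w x"
      using \<epsilon> by (simp add: w_def \<beta>_def algebra_simps)
  qed
  then show ?thesis by (simp add: w_def)
qed

lemma energy_growth_odd:
  assumes t: "t \<in> {tt (2*n+1)..tt (2*n+2)}"
  shows "E t \<le> exp (2 * M (2*n+1) * len (2*n+1))
    * (E (tt (2*n+1)) + M (2*n+1) * len (2*n+1) * E (tt (2*n)))"
proof -
  let ?c = "tt (2*n+1)" and ?d = "tt (2*n+2)" and ?M = "M (2*n+1)"
  let ?\<beta> = "E ?c + ?M * len (2*n+1) * E (tt (2*n))"
  have M: "0 < ?M" using cond_ii by blast
  have cd: "?c < ?d" using tt_less[of "2*n+1"] by simp
  have "0 \<le> ?\<beta>" using M cd energy_bounds(2) tt_nonneg by simp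
  have "E s \<le> exp (2 * ?M * len (2*n+1)) * ?\<beta>" if s: "s \<in> {?c..<?d}" for s
  proof -
    have "E s \<le> ?\<beta> * exp (2 * ?M * (s - ?c))"
    proof (rule field_le_epsilon)
      fix e :: real assume "0 < e"
      then have "E s < (?\<beta> + e / exp (2 * ?M * (s - ?c))) * exp (2 * ?M * (s - ?c))"
        using energy_below_barrier_odd s by simp
      then show "E s \<le> ?\<beta> * exp (2 * ?M * (s - ?c)) + e"
        by (simp add: algebra_simps)
    qed
    also have "\<dots> \<le> ?\<beta> * exp (2 * ?M * len (2*n+1))"
      using \<open>0 \<le> ?\<beta>\<close> M s by (intro mult_left_mono) auto
    finally show ?thesis by (simp add: mult.commute)
  qed
  moreover have "continuous_on {?c..?d} E"
    using continuous_on_subset[OF continuous_on_E] tt_nonneg by auto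
  ultimately show ?thesis
    using t le_at_right_endpoint[OF _ cd] by (cases "t = ?d") auto
qed

definition cycle_factor :: "nat \<Rightarrow> real" where
  "cycle_factor n = even_decay_factor n + M (2*n+1) * len (2*n+1)"

lemma even_decay_factor_nonneg: "0 \<le> even_decay_factor n"
  using observability_constant_pos[of n] tt_less[of "2*n"]
  by (simp add: even_decay_factor_def add_nonneg_nonneg)

lemma odd_growth_pos: "0 < M (2*n+1) * len (2*n+1)"
  using cond_ii tt_less[of "2*n+1"] by simp

lemma cycle_factor_pos: "0 < cycle_factor n"
  using even_decay_factor_nonneg odd_growth_pos by (simp add: cycle_factor_def add_nonneg_pos)

lemma energy_next_even_time:
  "E (tt (2 * Suc n)) \<le> exp (2 * M (2*n+1) * len (2*n+1) + ln (cycle_factor n)) * E (tt (2*n))"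
proof -
  define x where "x = M (2*n+1) * len (2*n+1)"
  have "E (tt (2*n+2)) \<le> exp (2 * x) * (E (tt (2*n+1)) + x * E (tt (2*n)))"
    using energy_growth_odd[of "tt (2*n+2)" n] tt_less[of "2*n+1"] by (simp add: x_def mult.assoc)
  also have "\<dots> \<le> exp (2 * x) * (even_decay_factor n * E (tt (2*n)) + x * E (tt (2*n)))"
    using energy_decay_even[of n] by simp
  also have "\<dots> = exp (2 * x + ln (cycle_factor n)) * E (tt (2*n))"
  proof -
    have "exp (2 * x + ln (cycle_factor n)) = exp (2 * x) * (even_decay_factor n + x)"
      using cycle_factor_pos[of n] by (simp add: exp_add cycle_factor_def x_def)
    then show ?thesis by (simp add: algebra_simps)
  qed
  finally show ?thesis by (simp add: x_def mult.assoc)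
qed

lemma energy_on_cycle:
  assumes t: "tt (2*N) \<le> t" "t \<le> tt (2*N+2)"
  shows "E t \<le> (2 * exp 2 + 2 * exp (2 * M (2*N+1) * len (2*N+1) + ln (cycle_factor N))) * E (tt (2*N))"
proof -
  define x where "x = M (2*N+1) * len (2*N+1)"
  define C where "C = 2 * exp 2 + 2 * exp (2 * x + ln (cycle_factor N))"
  have Ea: "0 \<le> E (tt (2*N))" using energy_bounds(2) tt_nonneg by blast
  have "E t \<le> C * E (tt (2*N))"
  proof (cases "t \<le> tt (2*N+1)")
    case True
    have "1 \<le> C"
      unfolding C_def using exp_ge_add_one_self[of 2] exp_gt_zero[of "2 * x + ln (cycle_factor N)"] by linarith
    then have "E (tt (2*N)) \<le> C * E (tt (2*N))" using mult_right_mono[OF _ Ea] by fastforce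
    then show ?thesis using energy_antimono_even[of N "tt (2*N)" t] True t by simp
  next
    case False
    have "exp (2 * x) * (1 + x) \<le> C"
    proof (cases "x \<le> 1")
      case True
      then have "exp (2 * x) * (1 + x) \<le> exp 2 * 2"
        using odd_growth_pos[of N] by (intro mult_mono) (auto simp: x_def)
      then show ?thesis unfolding C_def using exp_gt_zero[of "2 * x + ln (cycle_factor N)"] by linarith
    next
      case False
      then have "1 + x \<le> 2 * cycle_factor N"
        using even_decay_factor_nonneg[of N] by (simp add: cycle_factor_def x_def)
      then have "exp (2 * x) * (1 + x) \<le> 2 * exp (2 * x + ln (cycle_factor N))"
        using cycle_factor_pos[of N] by (simp add: exp_add mult_left_mono)
      then show ?thesis unfolding C_def using exp_gt_zero[of 2] by linarith
    qed
    have "E (tt (2*N+1)) \<le> E (tt (2*N))"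
      using energy_antimono_even[of N "tt (2*N)" "tt (2*N+1)"] tt_less[of "2*N"] by simp
    have "E t \<le> exp (2 * x) * (E (tt (2*N+1)) + x * E (tt (2*N)))"
      using energy_growth_odd[of t N] False t by (simp add: x_def mult.assoc)
    also have "\<dots> \<le> exp (2 * x) * (E (tt (2*N)) + x * E (tt (2*N)))"
      using \<open>E (tt (2*N+1)) \<le> E (tt (2*N))\<close> by simp
    also have "\<dots> = (exp (2 * x) * (1 + x)) * E (tt (2*N))" by (simp add: algebra_simps)
    also have "\<dots> \<le> C * E (tt (2*N))"
      using \<open>exp (2 * x) * (1 + x) \<le> C\<close> Ea by (rule mult_right_mono)
    finally show ?thesis .
  qed
  then show ?thesis by (simp add: C_def x_def mult.assoc)
qed

theorem energy_tendsto_zero: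
  assumes tt_lim: "filterlim tt at_top sequentially"
    and diverges: "filterlim (\<lambda>N. \<Sum>n<N. 2 * M (2*n+1) * len (2*n+1) + ln (cycle_factor n)) at_bot sequentially"
  shows "(E \<longlongrightarrow> 0) at_top"
proof -
  define \<Sigma> where "\<Sigma> N = (\<Sum>n<N. 2 * M (2*n+1) * len (2*n+1) + ln (cycle_factor n))" for N
  have even_times: "E (tt (2*N)) \<le> exp (\<Sigma> N) * E (tt 0)" for N
  proof (induction N)
    case (Suc N)
    have "E (tt (2 * Suc N)) \<le> exp (2 * M (2*N+1) * len (2*N+1) + ln (cycle_factor N)) * E (tt (2*N))"
      by (rule energy_next_even_time)
    also have "\<dots> \<le> exp (2 * M (2*N+1) * len (2*N+1) + ln (cycle_factor N)) * (exp (\<Sigma> N) * E (tt 0))"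
      using Suc.IH by (rule mult_left_mono) simp
    finally show ?case by (simp add: \<Sigma>_def exp_add mult_ac)
  qed (simp add: \<Sigma>_def)
  define A where "A N = (2 * exp 2 * exp (\<Sigma> N) + 2 * exp (\<Sigma> (Suc N))) * E (tt 0)" for N
  show ?thesis
  proof (rule tendsto_zero_by_blocks[of "\<lambda>N. tt (2*N)" A])
    show "strict_mono (\<lambda>N. tt (2*N))"
      using tt_mono by (simp add: strict_mono_def)
    show "filterlim (\<lambda>N. tt (2*N)) at_top sequentially"
      using filterlim_compose[OF tt_lim filterlim_subseq[of "\<lambda>N. 2*N"]] by (simp add: strict_mono_def o_def)
    have "(\<lambda>N. exp (\<Sigma> N)) \<longlonglongrightarrow> 0"
      using filterlim_compose[OF exp_at_bot diverges] by (simp add: \<Sigma>_def o_def)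
    then have "A \<longlonglongrightarrow> (2 * exp 2 * 0 + 2 * 0) * E (tt 0)"
      unfolding A_def by (intro tendsto_intros LIMSEQ_Suc)
    then show "A \<longlonglongrightarrow> 0" by simp
    fix N t assume t: "tt (2*N) \<le> t" "t \<le> tt (2 * Suc N)"
    have "0 \<le> t" using t tt_nonneg order_trans by blast
    have "E t \<le> (2 * exp 2 + 2 * exp (2 * M (2*N+1) * len (2*N+1) + ln (cycle_factor N))) * E (tt (2*N))"
      using energy_on_cycle t by simp
    also have "\<dots> \<le> (2 * exp 2 + 2 * exp (2 * M (2*N+1) * len (2*N+1) + ln (cycle_factor N)))
        * (exp (\<Sigma> N) * E (tt 0))"
      using even_times by (rule mult_left_mono) (simp add: add_nonneg_nonneg)
    also have "\<dots> = A N"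
    proof -
      have "\<Sigma> (Suc N) = (2 * M (2*N+1) * len (2*N+1) + ln (cycle_factor N)) + \<Sigma> N"
        by (simp add: \<Sigma>_def)
      then show ?thesis by (simp only: A_def exp_add) (simp add: algebra_simps)
    qed
    finally show "\<bar>E t\<bar> \<le> A N" using energy_bounds(2)[OF \<open>0 \<le> t\<close>] by simp
  qed
qed

end

theorem theorem3p2:
  fixes DA V :: "'h::{real_inner,complete_space} set"
    and A S :: "'h \<Rightarrow> 'h"
    and B1 B1s :: "real \<Rightarrow> 'h \<Rightarrow>\<^sub>L 'h"
    and B2 :: "real \<Rightarrow> 'u::{real_inner,complete_space} \<Rightarrow>\<^sub>L 'h"
    and B2s :: "real \<Rightarrow> 'h \<Rightarrow>\<^sub>L 'u"
    and tt m M :: "nat \<Rightarrow> real"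
    and \<tau> lam1 :: real
    and f :: "'h \<Rightarrow> 'h" and F :: "'h \<Rightarrow> real"
    and u0 u1 :: 'h and u u' :: "real \<Rightarrow> 'h"
  defines "T \<equiv> (\<lambda>n. tt (Suc n) - tt n)"
  defines "ctil \<equiv> (\<lambda>n. 1 / (1 + (T (2*n))^3 / 30 *
              (1 / (4 / (lam1 * m (2*n)) + 3 * (T (2*n))\<^sup>2 / (32 * m (2*n))
                    + M (2*n) * (T (2*n))\<^sup>2 / (16 * lam1))))
            + M (2*n+1) * T (2*n+1))"
  assumes A_sa: "self_adjoint_op DA A" and A_pos: "positive_op DA A"
    and A_coer: "coercive_op DA A"
    and S_sqrt: "is_sqrt_op DA A V S"
    and lam_pos: "lam1 > 0"
    and poincare: "\<forall>v\<in>V. lam1 * (norm v)\<^sup>2 \<le> (norm (S v))\<^sup>2"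
    and B1_adj: "\<forall>t x y. inner (blinfun_apply (B1 t) x) y = inner x (blinfun_apply (B1s t) y)"
    and B2_adj: "\<forall>t x y. inner (blinfun_apply (B2 t) x) y = inner x (blinfun_apply (B2s t) y)"
    and tt0: "tt 0 = 0" and tt_mono: "strict_mono tt"
    and tt_lim: "filterlim tt at_top sequentially"
    and B2_off: "\<forall>n. \<forall>t\<in>{tt (2*n)..<tt (2*n+1)}. B2 t = 0"
    and B1_off: "\<forall>n. \<forall>t\<in>{tt (2*n+1)..<tt (2*n+2)}. B1 t = 0"
    and B1_C1: "\<forall>n. \<exists>g g'.
        (\<forall>s\<in>{tt (2*n)..tt (2*n+1)}. (g has_vector_derivative g' s) (at s within {tt (2*n)..tt (2*n+1)}))
        \<and> continuous_on {tt (2*n)..tt (2*n+1)} g'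
        \<and> (\<forall>s\<in>{tt (2*n)..<tt (2*n+1)}. g s = B1 s)"
    and B2_C1: "\<forall>n. \<exists>g g'.
        (\<forall>s\<in>{tt (2*n+1)..tt (2*n+2)}. (g has_vector_derivative g' s) (at s within {tt (2*n+1)..tt (2*n+2)}))
        \<and> continuous_on {tt (2*n+1)..tt (2*n+2)} g'
        \<and> (\<forall>s\<in>{tt (2*n+1)..<tt (2*n+2)}. g s = B2 s)"
    and cond_i: "\<forall>n. 0 < m (2*n) \<and> m (2*n) \<le> M (2*n) \<and>
        (\<forall>t\<in>{tt (2*n)..<tt (2*n+1)}. \<forall>x.
           m (2*n) * (norm x)\<^sup>2 \<le> (norm (blinfun_apply (B1s t) x))\<^sup>2 \<and>
           (norm (blinfun_apply (B1s t) x))\<^sup>2 \<le> M (2*n) * (norm x)\<^sup>2)"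
    and cond_ii: "\<forall>n. 0 < M (2*n+1) \<and>
        (\<forall>t\<in>{tt (2*n+1)..<tt (2*n+2)}. \<forall>x.
           (norm (blinfun_apply (B2s t) x))\<^sup>2 \<le> M (2*n+1) * (norm x)\<^sup>2)"
    and tau_pos: "\<tau> > 0" and tau_le: "\<forall>n. \<tau> \<le> T (2*n)"
    and f_loclip: "\<forall>K>0. \<exists>L. \<forall>x\<in>V. \<forall>y\<in>V. norm (S x) \<le> K \<longrightarrow> norm (S y) \<le> K \<longrightarrow>
                     norm (f x - f y) \<le> L * norm (S (x - y))"
    and F0: "F 0 = 0"
    and F_deriv: "\<forall>x\<in>V. \<forall>v\<in>V. ((\<lambda>s. F (x + s *\<^sub>R v)) has_real_derivative inner (f x) v) (at 0)"
    and NL1: "\<forall>x\<in>V. inner x (f x) \<le> 0"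
    and NL2: "\<forall>x\<in>V. inner x (f x) - F x \<le> 0"
    and sum_div: "filterlim (\<lambda>N. \<Sum>n<N. 2 * M (2*n+1) * T (2*n+1) + ln (ctil n)) at_bot sequentially"
    and u0V: "u0 \<in> V"
    and sol: "delayed_wave_solution V S B1 B1s B2 B2s \<tau> f u0 u1 u u'"
  shows "(energy_S S F u u' \<longlongrightarrow> 0) at_top"
proof -
  interpret intermittent_delay_problem V S f F B1 B1s B2 B2s tt m M \<tau> lam1 u0 u1 u u'
  proof
    show "lin_op_on V S" using S_sqrt unfolding is_sqrt_op_def self_adjoint_op_def by blast
    show "continuous_on {tt (2*n)..<tt (2*n+1)} B1" for n
      using B1_C1 by (intro continuous_on_Ico_of_differentiable_extension) blast
    show "continuous_on {tt (2*n+1)..<tt (2*n+2)} B2" for n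
      using B2_C1 by (intro continuous_on_Ico_of_differentiable_extension) blast
    show "\<forall>n. \<tau> \<le> tt (2*n+1) - tt (2*n)" using tau_le by (simp add: T_def)
  qed fact+
  have "ctil = cycle_factor"
    by (simp add: fun_eq_iff ctil_def T_def cycle_factor_def even_decay_factor_def observability_constant_def)
  then show ?thesis
    using energy_tendsto_zero[OF tt_lim] sum_div by (simp add: T_def)
qed

end
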